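(* Let $T:\mathbb{T}^d\to\mathbb{T}^d$ be a $C^\infty$ uniformly expanding map with $\gamma:=\inf_{(x,v)\in S\mathbb{T}^d}|D_xT(v)|>1$ and smooth invariant probability density $h>0$, let $\tau\in C^\infty(\mathbb{T}^d,\mathbb{R}^\ell)$, $s<0$, and let $R$, $g$, $\mathcal{F}^n_{\mathbf n,y}$ and $\widetilde p_{\mathbf n,n}$ be as in the context. Let $\mathbf n\in\mathbb{S}^{\ell-1}$. Then: (1) $\widetilde p_{\mathbf n,n}(x,\xi)\le1$ for all $n\in\mathbb{N}$ and $(x,\xi)\in\mathbb{T}^d\times\mathbb{R}^d$; (2) $\widetilde p_{\mathbf n,n}(x,\xi)<1$ if and only if there is $y\in T^{-n}x$ with $|\mathcal{F}^n_{\mathbf n,y}(\xi)|>R$; (3) $\widetilde p_{\mathbf n,n}(x,\xi)\le\left(\frac{\gamma+1}{2}\right)^{2s}<1$ for all $n\in\mathbb{N}$ and all $(x,\xi)$ with $|\xi|>R$.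
   Context: Fix $R>\max\{1,\max\{1,2\|D\tau\|\}/(\gamma-1)\}$ with $\|D\tau\|=\sup_x|D_x\tau|$. Let $g_0\in C^\infty(\mathbb{R}^+)$ with $g_0(t)=1$ for $t\le R$, $g_0(t)=t$ for $t\ge\frac{\gamma+1}{2}R$, and on $[R,\frac{\gamma+1}{2}R)$ $g_0$ strictly increasing with $1\le g_0(t)\le t$; $g(\xi)=g_0(|\xi|)$. $\mathcal{A}_n(y)=\frac{1}{|\mathrm{Jac}(T^n)(y)|}\frac{h(y)}{h(T^ny)}$, $W_n(x)=\sum_{k=0}^{n-1}(D_xT^k)^t(D_{T^kx}\tau)^t$, $\mathcal{F}^n_{\mathbf n,y}(\xi)=(D_yT^n)^t\xi+W_n(y)\mathbf n$, and $\widetilde p_{\mathbf n,n}(x,\xi)=\sum_{T^ny=x}\mathcal{A}_n(y)\left[g(\mathcal{F}^n_{\mathbf n,y}(\xi))/g(\xi)\right]^{2s}$. *)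

theory Defs
  imports "HOL-Analysis.Analysis"
begin

fun dirder :: "'a::real_normed_vector list \<Rightarrow> ('a \<Rightarrow> 'b::real_normed_vector) \<Rightarrow> 'a \<Rightarrow> 'b" where
  "dirder [] f = f"
| "dirder (v # vs) f = (\<lambda>x. frechet_derivative (dirder vs f) (at x) v)"

definition smooth_on :: "'a::real_normed_vector set \<Rightarrow> ('a \<Rightarrow> 'b::real_normed_vector) \<Rightarrow> bool" where
  "smooth_on S f \<longleftrightarrow> open S \<and> (\<forall>vs. \<forall>x\<in>S. dirder vs f differentiable (at x))"

definition int_vec :: "real^'d \<Rightarrow> bool" where
  "int_vec k \<longleftrightarrow> (\<forall>i. k $ i \<in> \<int>)"

definition periodic :: "(real^'d \<Rightarrow> 'b) \<Rightarrow> bool" where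
  "periodic f \<longleftrightarrow> (\<forall>x k. int_vec k \<longrightarrow> f (x + k) = f x)"

text \<open>T : R^d -> R^d is the lift of a map of the torus T^d = R^d / Z^d.\<close>
definition torus_lift :: "(real^'d \<Rightarrow> real^'d) \<Rightarrow> bool" where
  "torus_lift T \<longleftrightarrow> (\<forall>x k. int_vec k \<longrightarrow> int_vec (T (x + k) - T x))"

text \<open>Fundamental domain [0,1)^d, representing the points of the torus.\<close>
definition fund :: "(real^'d) set" where
  "fund = {y. \<forall>i. 0 \<le> y $ i \<and> y $ i < 1}"

text \<open>T^{-n} x, represented in the fundamental domain.\<close>
definition preim :: "(real^'d \<Rightarrow> real^'d) \<Rightarrow> nat \<Rightarrow> real^'d \<Rightarrow> (real^'d) set" where
  "preim T n x = {y \<in> fund. int_vec ((T ^^ n) y - x)}"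

text \<open>Invariance of the measure h(x) dx on the torus under T:
  mu(T^{-1} A) = mu(A) for all Borel sets A of the torus (= Z^d-periodic Borel sets of R^d).\<close>
definition invariant_density :: "(real^'d \<Rightarrow> real^'d) \<Rightarrow> (real^'d \<Rightarrow> real) \<Rightarrow> bool" where
  "invariant_density T h \<longleftrightarrow>
     (\<forall>A \<in> sets borel. (\<forall>x k. int_vec k \<longrightarrow> (x \<in> A \<longleftrightarrow> x + k \<in> A)) \<longrightarrow>
        integral (cbox 0 One) (\<lambda>y. indicator A (T y) * h y)
          = integral (cbox 0 One) (\<lambda>y. indicator A y * h y))"

definition DT :: "(real^'d \<Rightarrow> real^'d) \<Rightarrow> nat \<Rightarrow> real^'d \<Rightarrow> real^'d \<Rightarrow> real^'d" where
  "DT T k y = frechet_derivative (T ^^ k) (at y)"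

definition gamma_exp :: "(real^'d \<Rightarrow> real^'d) \<Rightarrow> real" where
  "gamma_exp T = Inf {norm (frechet_derivative T (at x) v) | x v. norm v = 1}"

definition Dtau_norm :: "(real^'d \<Rightarrow> real^'l) \<Rightarrow> real" where
  "Dtau_norm \<tau> = Sup {onorm (frechet_derivative \<tau> (at x)) | x. True}"

definition A_n :: "(real^'d \<Rightarrow> real^'d) \<Rightarrow> (real^'d \<Rightarrow> real) \<Rightarrow> nat \<Rightarrow> real^'d \<Rightarrow> real" where
  "A_n T h n y = (1 / \<bar>det (matrix (DT T n y))\<bar>) * (h y / h ((T ^^ n) y))"

definition W_n :: "(real^'d \<Rightarrow> real^'d) \<Rightarrow> (real^'d \<Rightarrow> real^'l) \<Rightarrow> nat \<Rightarrow> real^'d \<Rightarrow> real^'l \<Rightarrow> real^'d" where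
  "W_n T \<tau> n x w = (\<Sum>k<n. adjoint (DT T k x) (adjoint (frechet_derivative \<tau> (at ((T ^^ k) x))) w))"

definition F_n :: "(real^'d \<Rightarrow> real^'d) \<Rightarrow> (real^'d \<Rightarrow> real^'l) \<Rightarrow> nat \<Rightarrow> real^'l \<Rightarrow> real^'d \<Rightarrow> real^'d \<Rightarrow> real^'d" where
  "F_n T \<tau> n nn y \<xi> = adjoint (DT T n y) \<xi> + W_n T \<tau> n y nn"

definition p_tilde :: "(real^'d \<Rightarrow> real^'d) \<Rightarrow> (real^'d \<Rightarrow> real) \<Rightarrow> (real^'d \<Rightarrow> real^'l) \<Rightarrow> (real \<Rightarrow> real)
    \<Rightarrow> real \<Rightarrow> real^'l \<Rightarrow> nat \<Rightarrow> real^'d \<Rightarrow> real^'d \<Rightarrow> real" where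
  "p_tilde T h \<tau> g0 s nn n x \<xi> =
     (\<Sum>y\<in>preim T n x. A_n T h n y * (g0 (norm (F_n T \<tau> n nn y \<xi>)) / g0 (norm \<xi>)) powr (2 * s))"

end

theory Submission
  imports Defs
begin

text \<open>Since \<open>h\<close> is \<open>T\<close>-invariant, the transfer operator of \<open>T^n\<close> fixes \<open>h\<close>: summing
  \<open>h y / |det D_y T^n|\<close> over the preimages \<open>y\<close> of \<open>x\<close> gives \<open>h x\<close>, so the weights \<open>A_n\<close> form a
  probability vector on each fibre. This is obtained by testing the invariance on small balls of the
  torus, whose preimages split into pieces near the fibre points with volumes governed by the Jacobian.
  Hence \<open>p_tilde\<close> is a weighted mean of the terms \<open>(g (F y) / g \<xi>) powr (2 s)\<close>. For \<open>|\<xi>| \<le> R\<close>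
  the denominator is \<open>1\<close> and each term is at most \<open>1\<close>, with equality iff \<open>|F y| \<le> R\<close>. For
  \<open>|\<xi>| > R\<close> the choice of \<open>R\<close> makes the cocycle \<open>F\<close> expand by the factor \<open>(\<gamma> + 1) / 2\<close> per
  step, so every ratio \<open>g (F y) / g \<xi>\<close> is at least \<open>(\<gamma> + 1) / 2\<close> and, as \<open>s < 0\<close>, every term is at
  most \<open>((\<gamma> + 1) / 2) powr (2 s)\<close>.\<close>

section \<open>Lebesgue measure of linear images\<close>

lemma det_matrix_shear:
  fixes m n :: "'n::finite"
  assumes "m \<noteq> n"
  shows "det (matrix (\<lambda>v::real^'n. \<chi> i. if i = m then v $ m + v $ n else v $ i)) = 1"
proof -
  have "matrix (\<lambda>v::real^'n. \<chi> i. if i = m then v $ m + v $ n else v $ i)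
      = (\<chi> k. if k = m then row m (mat 1) + 1 *s row n (mat 1) else row k (mat 1 :: real^'n^'n))"
    by (auto simp: matrix_def vec_eq_iff row_def mat_def axis_def)
  then show ?thesis
    using det_row_operation[OF assms, of "mat 1 :: real^'n^'n" 1] by simp
qed

lemma measure_shear_cbox:
  fixes m n :: "'n::finite"
  assumes "m \<noteq> n"
  shows "measure lebesgue ((\<lambda>v::real^'n. \<chi> i. if i = m then v $ m + v $ n else v $ i) ` cbox a b)
       = measure lebesgue (cbox a b)"
proof (cases "cbox a b = {}")
  case False
  let ?h = "\<lambda>v::real^'n. \<chi> i. if i = m then v $ m + v $ n else v $ i"
  \<comment> \<open>the library computes the shear of boxes with nonnegative \<open>n\<close>-th corner, so translate first\<close>
  let ?v = "\<chi> i. if i = n then - a $ n else 0"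
  have "?h ` cbox a b = (+) (\<chi> i. if i = m \<or> i = n then a $ n else 0) ` ?h ` (+) ?v ` cbox a b"
    using assms unfolding image_comp o_def by (force simp: vec_eq_iff)
  then have "measure lebesgue (?h ` cbox a b) = measure lebesgue (?h ` cbox (?v + a) (?v + b))"
    by (simp only: measure_translation cbox_translation)
  also have "\<dots> = measure lebesgue (cbox (?v + a) (?v + b))"
  proof (rule measure_shear_interval[OF assms])
    show "cbox (?v + a) (?v + b) \<noteq> {}"
      using False by (metis cbox_translation image_is_empty)
  qed simp
  also have "\<dots> = measure lebesgue (cbox a b)"
    by (metis cbox_translation measure_translation)
  finally show ?thesis .
qed simp

lemma det_matrix_coordinate_swap:
  fixes m n :: "'n::finite"
  shows "\<bar>det (matrix (\<lambda>v::real^'n. \<chi> i. v $ Transposition.transpose m n i))\<bar> = 1"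
proof -
  have "(\<chi> i j. if Transposition.transpose m n i = j then 1 else 0)
      = (\<chi> i j. if j = Transposition.transpose m n i then 1 else (0::real))"
    by (auto intro!: Cart_lambda_cong)
  then have "matrix (\<lambda>v::real^'n. \<chi> i. v $ Transposition.transpose m n i)
           = transpose (\<chi> i j. mat 1 $ i $ Transposition.transpose m n j)"
    by (auto simp: matrix_eq transpose_def axis_def mat_def matrix_def)
  then show ?thesis
    by (simp add: det_permute_columns permutes_swap_id sign_swap_id abs_mult)
qed

lemma measure_coordinate_swap_cbox:
  fixes m n :: "'n::finite"
  shows "measure lebesgue ((\<lambda>v::real^'n. \<chi> i. v $ Transposition.transpose m n i) ` cbox a b)
       = measure lebesgue (cbox a b)"
proof (cases "cbox a b = {}")
  case False
  let ?h = "\<lambda>v::real^'n. \<chi> i. v $ Transposition.transpose m n i"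
  have eq: "?h ` cbox a b = cbox (?h a) (?h b)"
    by (auto simp: image_iff lambda_swap_Galois mem_box_cart) (metis transpose_involutory)+
  then have "cbox (?h a) (?h b) \<noteq> {}"
    using False by blast
  then show ?thesis
    using False eq prod.permute[OF permutes_swap_id, where S=UNIV and g="\<lambda>i. (b - a) $ i", symmetric]
    by (simp add: content_cbox_cart)
qed simp

text \<open>The library proves the following for index types of class \<open>wellorder\<close> only; the
  determinant of a shear is computed here by a row operation instead of triangularity.\<close>

lemma measure_linear_image_cbox_vec:
  fixes f :: "real^'n::finite \<Rightarrow> real^'n"
  assumes "linear f"
  shows "measure lebesgue (f ` cbox a b) = \<bar>det (matrix f)\<bar> * measure lebesgue (cbox a b)"
proof -
  let ?P = "\<lambda>f. \<forall>a b. measure lebesgue (f ` cbox a b) = \<bar>det (matrix f)\<bar> * measure lebesgue (cbox a b)"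
  have "?P f"
  proof (rule induct_linear_elementary[OF assms])
    fix f g :: "real^'n \<Rightarrow> real^'n"
    assume f: "linear f" "?P f" and g: "linear g" "?P g"
    show "?P (f \<circ> g)"
    proof (intro allI)
      fix a b :: "real^'n"
      have "measure lebesgue (f ` (g ` cbox a b)) = \<bar>det (matrix f)\<bar> * measure lebesgue (g ` cbox a b)"
        using measure_linear_sufficient[OF f(1) measurable_linear_image_interval[OF g(1)]] f(2) by metis
      then show "measure lebesgue ((f \<circ> g) ` cbox a b) = \<bar>det (matrix (f \<circ> g))\<bar> * measure lebesgue (cbox a b)"
        using g(2) matrix_compose[OF g(1) f(1)] by (simp add: image_comp abs_mult det_mul)
    qed
  next
    fix f :: "real^'n \<Rightarrow> real^'n" and i
    assume f: "linear f" "\<And>x. f x $ i = 0"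
    then have "\<not> inj f"
      by (metis (full_types) linear_injective_imp_surjective one_neq_zero surjE vec_component)
    then have "det (matrix f) = 0" and "negligible (f ` S)" for S
      using det_nz_iff_inj[OF f(1)] negligible_linear_singular_image[OF f(1)] by auto
    then show "?P f"
      by (simp add: negligible_imp_measure0)
  next
    fix c :: "'n \<Rightarrow> real"
    show "?P (\<lambda>x. \<chi> i. c i * x $ i)"
      by (simp add: measure_stretch axis_def matrix_def det_diagonal)
  next
    fix m n :: 'n
    show "?P (\<lambda>x. \<chi> i. x $ Transposition.transpose m n i)"
      by (simp add: det_matrix_coordinate_swap measure_coordinate_swap_cbox)
  next
    fix m n :: 'n
    assume "m \<noteq> n"
    then show "?P (\<lambda>x. \<chi> i. if i = m then x $ m + x $ n else x $ i)"
      by (simp add: det_matrix_shear measure_shear_cbox)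
  qed
  then show ?thesis by blast
qed

lemma measure_linear_image_vec:
  fixes f :: "real^'n::finite \<Rightarrow> real^'n"
  assumes "linear f" "S \<in> lmeasurable"
  shows "measure lebesgue (f ` S) = \<bar>det (matrix f)\<bar> * measure lebesgue S"
  using measure_linear_sufficient[OF assms measure_linear_image_cbox_vec[OF assms(1)]] by auto

lemma measure_linear_sublevel:
  fixes L :: "real^'d \<Rightarrow> real^'d"
  assumes "linear L" "inj L" "0 \<le> a"
  shows "{u. norm (L (u - y)) < a} \<in> sets borel"
    and "emeasure lborel {u. norm (L (u - y)) < a} = ennreal (measure lborel (ball (0::real^'d) a) / \<bar>det (matrix L)\<bar>)"
proof -
  define V where "V = {v. norm (L v) < a}"
  have "continuous_on UNIV L"
    using assms(1) by (simp add: linear_continuous_on linear_conv_bounded_linear)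
  then have open_V: "open V" and open_sublevel: "open {u. norm (L (u - y)) < a}"
    unfolding V_def by (auto intro!: open_Collect_less continuous_intros continuous_on_compose2[of UNIV L])
  then show "{u. norm (L (u - y)) < a} \<in> sets borel"
    by auto
  obtain \<beta> where "\<beta> > 0" "\<And>v. \<beta> * norm v \<le> norm (L v)"
    using linear_inj_bounded_below_pos[OF assms(1,2)] by blast
  then have "norm v \<le> a / \<beta>" if "v \<in> V" for v
    using that by (simp add: V_def pos_le_divide_eq mult.commute) (meson less_imp_le order_trans)
  then have "bounded V"
    by (auto simp: bounded_iff)
  then have "V \<in> lmeasurable"
    using open_V by (intro bounded_set_imp_lmeasurable borel_open) auto
  have "L ` V = ball 0 a"
    using linear_injective_imp_surjective[OF assms(1,2)] by (auto simp: V_def image_iff surj_def) metis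
  moreover have "det (matrix L) \<noteq> 0"
    using det_nz_iff_inj[OF assms(1)] assms(2) by simp
  ultimately have "measure lebesgue V = measure lborel (ball (0::real^'d) a) / \<bar>det (matrix L)\<bar>"
    using measure_linear_image_vec[OF assms(1) \<open>V \<in> lmeasurable\<close>] by simp
  moreover have "{u. norm (L (u - y)) < a} = (+) y ` V"
    by (force simp: V_def)
  moreover have "measure lborel {u. norm (L (u - y)) < a} = measure lebesgue {u. norm (L (u - y)) < a}"
    using open_sublevel by (simp add: measure_completion borel_open)
  ultimately have "measure lborel {u. norm (L (u - y)) < a} = measure lborel (ball (0::real^'d) a) / \<bar>det (matrix L)\<bar>"
    by (simp add: measure_translation)
  moreover have "emeasure lborel {u. norm (L (u - y)) < a} < \<infinity>"
    using \<open>bounded V\<close> \<open>{u. norm (L (u - y)) < a} = (+) y ` V\<close> open_sublevel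
    by (metis bounded_translation emeasure_bounded_finite borel_open sets_lborel)
  ultimately show "emeasure lborel {u. norm (L (u - y)) < a} = ennreal (measure lborel (ball (0::real^'d) a) / \<bar>det (matrix L)\<bar>)"
    by (simp add: emeasure_eq_ennreal_measure)
qed

section \<open>The integer lattice and the fundamental domain\<close>

definition floor_vec :: "real^'d \<Rightarrow> real^'d" where
  "floor_vec x = (\<chi> i. of_int \<lfloor>x $ i\<rfloor>)"

lemma int_vec_add [intro]: "int_vec a \<Longrightarrow> int_vec b \<Longrightarrow> int_vec (a + b)"
  by (auto simp: int_vec_def)

lemma int_vec_diff [intro]: "int_vec a \<Longrightarrow> int_vec b \<Longrightarrow> int_vec (a - b)"
  by (auto simp: int_vec_def)

lemma int_vec_minus [intro]: "int_vec a \<Longrightarrow> int_vec (- a)"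
  by (auto simp: int_vec_def)

lemma int_vec_zero [simp, intro]: "int_vec 0"
  by (auto simp: int_vec_def)

lemma int_vec_floor_vec [simp, intro]: "int_vec (floor_vec x)"
  by (auto simp: int_vec_def floor_vec_def)

lemma Ints_abs_less_one_eq_0: "(z::real) \<in> \<int> \<Longrightarrow> \<bar>z\<bar> < 1 \<Longrightarrow> z = 0"
  by (auto elim!: Ints_cases)

lemma int_vec_norm_less_one_eq_0: "int_vec k \<Longrightarrow> norm k < 1 \<Longrightarrow> k = 0"
  unfolding vec_eq_iff int_vec_def
  by (metis Ints_abs_less_one_eq_0 component_le_norm_cart le_less_trans zero_index)

lemma closed_int_vec: "closed {k::real^'d. int_vec k}"
proof -
  have "{k::real^'d. int_vec k} = (\<Inter>i. (\<lambda>x. x $ i) -` \<int>)"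
    by (auto simp: int_vec_def)
  moreover have "closed ((\<lambda>x::real^'d. x $ i) -` \<int>)" for i
    by (intro continuous_closed_vimage closed_Ints) (auto intro: continuous_intros)
  ultimately show ?thesis by auto
qed

lemma finite_int_vec_bounded: "finite {k::real^'d. int_vec k \<and> norm k \<le> B}"
proof -
  let ?N = "\<lceil>B\<rceil>"
  have "{k::real^'d. int_vec k \<and> norm k \<le> B} \<subseteq> (\<lambda>f. \<chi> i. of_int (f i)) ` (UNIV \<rightarrow>\<^sub>E {-?N..?N})"
  proof
    fix k :: "real^'d"
    assume k: "k \<in> {k. int_vec k \<and> norm k \<le> B}"
    let ?f = "\<lambda>i. \<lfloor>k $ i\<rfloor>"
    have "?f i \<in> {-?N..?N}" for i
    proof -
      have "\<bar>k $ i\<bar> \<le> B"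
        using component_le_norm_cart[of k i] k by auto
      then show ?thesis
        using le_of_int_ceiling[of B] by (auto simp: le_floor_iff floor_le_iff) linarith+
    qed
    moreover have "k = (\<chi> i. of_int (?f i))"
      using k by (auto simp: vec_eq_iff int_vec_def elim!: Ints_cases)
    ultimately show "k \<in> (\<lambda>f. \<chi> i. of_int (f i)) ` (UNIV \<rightarrow>\<^sub>E {-?N..?N})"
      by (intro rev_image_eqI[of ?f]) auto
  qed
  moreover have "finite (UNIV \<rightarrow>\<^sub>E {-?N..?N} :: ('d \<Rightarrow> int) set)"
    by (intro finite_PiE) auto
  ultimately show ?thesis
    using finite_subset by blast
qed

lemma diff_floor_vec_in_fund: "x - floor_vec x \<in> fund"
  using frac_lt_1 by (auto simp: fund_def floor_vec_def frac_def)

lemma fund_translate_eq_0: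
  assumes "y \<in> fund" "y + k \<in> fund" "int_vec k"
  shows "k = 0"
proof -
  have "\<bar>k $ i\<bar> < 1" "k $ i \<in> \<int>" for i
    using assms by (auto simp: fund_def int_vec_def dest!: spec[of _ i])
  then show ?thesis
    by (simp add: vec_eq_iff Ints_abs_less_one_eq_0)
qed

lemma diff_in_fund_iff: "int_vec k \<Longrightarrow> x - k \<in> fund \<longleftrightarrow> k = floor_vec x"
  using fund_translate_eq_0[of "x - k" "k - floor_vec x"] diff_floor_vec_in_fund[of x] by auto

lemma norm_le_card_if_in_fund: "y \<in> fund \<Longrightarrow> norm y \<le> real CARD('d)" for y :: "real^'d"
proof -
  assume y: "y \<in> fund"
  have "norm y \<le> (\<Sum>i\<in>UNIV. \<bar>y $ i\<bar>)"
    by (rule norm_le_l1_cart)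
  also have "\<dots> \<le> (\<Sum>i\<in>(UNIV::'d set). 1)"
  proof (rule sum_mono)
    show "\<bar>y $ i\<bar> \<le> 1" for i
      using y unfolding fund_def by (auto dest!: spec[of _ i])
  qed
  finally show ?thesis by simp
qed

lemma One_vec_nth [simp]: "(One::real^'d) $ i = 1"
proof -
  have "One \<bullet> (axis i 1 :: real^'d) = 1"
    by (rule inner_sum_Basis) (simp add: axis_in_Basis_iff)
  then show ?thesis
    by (simp add: cart_eq_inner_axis)
qed

lemma sum_Basis_vec_nth [simp]: "(\<Sum>x\<in>(Basis::(real^'d) set). x $ i) = 1"
  using One_vec_nth[of i] by simp

lemma fund_subset_unit_cube: "fund \<subseteq> cbox 0 One"
  by (auto simp: fund_def mem_box_cart less_imp_le)

lemma unit_cube_nonempty: "cbox (0::real^'d) One \<noteq> {}"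
  by (simp add: box_ne_empty(1) cart_eq_inner_axis[symmetric])

lemma fund_borel [measurable]: "(fund::(real^'d) set) \<in> sets borel"
proof -
  have "fund = (\<Inter>i. {y::real^'d. 0 \<le> y $ i} \<inter> {y. y $ i < 1})"
    by (auto simp: fund_def)
  also have "\<dots> \<in> sets borel"
    by (intro sets.countable_INT'' sets.Int borel_closed borel_open closed_Collect_le open_Collect_less)
       (auto intro: continuous_intros)
  finally show ?thesis .
qed

section \<open>Integrals of periodic functions\<close>

lemma nn_integral_lborel_translate:
  fixes f :: "real^'d \<Rightarrow> ennreal"
  assumes [measurable]: "f \<in> borel_measurable borel"
  shows "(\<integral>\<^sup>+x. f x \<partial>lborel) = (\<integral>\<^sup>+x. f (k + x) \<partial>lborel)"
proof -
  have "(\<integral>\<^sup>+x. f x \<partial>lborel) = (\<integral>\<^sup>+x. f x \<partial>distr lborel borel ((+) k))"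
    by (simp add: lborel_distr_plus)
  also have "\<dots> = (\<integral>\<^sup>+x. f (k + x) \<partial>lborel)"
    by (subst nn_integral_distr) auto
  finally show ?thesis .
qed

text \<open>Cut \<open>E\<close> into the finitely many pieces lying in the translates \<open>k + fund\<close> and move each piece
  back by \<open>k\<close>.\<close>

lemma nn_integral_fund_eq_fundamental_set:
  fixes G :: "real^'d \<Rightarrow> ennreal" and E :: "(real^'d) set"
  assumes [measurable]: "G \<in> borel_measurable borel" "E \<in> sets borel"
    and G_periodic: "\<And>x k. int_vec k \<Longrightarrow> G (x + k) = G x"
    and "bounded E"
    and E_injective: "\<And>x k. x \<in> E \<Longrightarrow> x + k \<in> E \<Longrightarrow> int_vec k \<Longrightarrow> k = 0"
    and E_covers: "\<And>x. G x \<noteq> 0 \<Longrightarrow> \<exists>k. int_vec k \<and> x + k \<in> E"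
  shows "(\<integral>\<^sup>+x. G x * indicator fund x \<partial>lborel) = (\<integral>\<^sup>+x. G x * indicator E x \<partial>lborel)"
proof -
  obtain B where B: "\<And>x. x \<in> E \<Longrightarrow> norm x \<le> B"
    using \<open>bounded E\<close> bounded_iff by blast
  define K where "K = {k::real^'d. int_vec k \<and> norm k \<le> B + real CARD('d)}"
  have "finite K"
    unfolding K_def by (rule finite_int_vec_bounded)
  have K_int: "\<And>k. k \<in> K \<Longrightarrow> int_vec k"
    by (auto simp: K_def)
  have in_K: "k \<in> K" if "int_vec k" "x \<in> E" "x - k \<in> fund" for x k
  proof -
    have "norm k \<le> norm x + norm (x - k)"
      using norm_triangle_ineq4[of x "x - k"] by simp
    also have "\<dots> \<le> B + real CARD('d)"
      using B[OF \<open>x \<in> E\<close>] norm_le_card_if_in_fund[OF \<open>x - k \<in> fund\<close>] by simp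
    finally show ?thesis
      using \<open>int_vec k\<close> by (simp add: K_def)
  qed
  have split_E: "G x * indicator E x = (\<Sum>k\<in>K. G x * indicator E x * indicator fund (x - k))" for x
  proof (cases "x \<in> E")
    case True
    have "(\<Sum>k\<in>K. G x * indicator E x * indicator fund (x - k)) = (\<Sum>k\<in>K. if k = floor_vec x then G x else 0)"
      using True diff_in_fund_iff[OF K_int] by (intro sum.cong) (auto simp: indicator_def)
    also have "\<dots> = G x"
      using in_K[OF _ True diff_floor_vec_in_fund] \<open>finite K\<close> by simp
    finally show ?thesis
      using True by simp
  qed simp
  have glue_fund: "(\<Sum>k\<in>K. G x * indicator E (x + k) * indicator fund x) = G x * indicator fund x" for x
  proof (cases "G x \<noteq> 0 \<and> x \<in> fund")
    case True
    then obtain k0 where k0: "int_vec k0" "x + k0 \<in> E"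
      using E_covers by blast
    have "k0 \<in> K"
      using in_K[OF k0] True by simp
    have "x + k \<in> E \<longleftrightarrow> k = k0" if "k \<in> K" for k
      using E_injective[OF k0(2), of "k - k0"] K_int[OF that] k0 by (auto simp: algebra_simps)
    then have "(\<Sum>k\<in>K. G x * indicator E (x + k) * indicator fund x) = (\<Sum>k\<in>K. if k = k0 then G x * indicator fund x else 0)"
      by (intro sum.cong) auto
    then show ?thesis
      using \<open>k0 \<in> K\<close> \<open>finite K\<close> by simp
  qed auto
  have "(\<integral>\<^sup>+x. G x * indicator E x \<partial>lborel)
      = (\<integral>\<^sup>+x. (\<Sum>k\<in>K. G x * indicator E x * indicator fund (x - k)) \<partial>lborel)"
    by (intro nn_integral_cong split_E)
  also have "\<dots> = (\<Sum>k\<in>K. \<integral>\<^sup>+x. G x * indicator E x * indicator fund (x - k) \<partial>lborel)"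
    by (rule nn_integral_sum) auto
  also have "\<dots> = (\<Sum>k\<in>K. \<integral>\<^sup>+x. G x * indicator E (x + k) * indicator fund x \<partial>lborel)"
  proof (rule sum.cong[OF refl])
    fix k
    assume "k \<in> K"
    have "(\<integral>\<^sup>+x. G x * indicator E x * indicator fund (x - k) \<partial>lborel)
        = (\<integral>\<^sup>+x. G (k + x) * indicator E (k + x) * indicator fund (k + x - k) \<partial>lborel)"
      by (rule nn_integral_lborel_translate) auto
    then show "(\<integral>\<^sup>+x. G x * indicator E x * indicator fund (x - k) \<partial>lborel)
        = (\<integral>\<^sup>+x. G x * indicator E (x + k) * indicator fund x \<partial>lborel)"
      using G_periodic[OF K_int[OF \<open>k \<in> K\<close>]] by (simp add: add.commute)
  qed
  also have "\<dots> = (\<integral>\<^sup>+x. (\<Sum>k\<in>K. G x * indicator E (x + k) * indicator fund x) \<partial>lborel)"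
    by (rule nn_integral_sum[symmetric]) auto
  also have "\<dots> = (\<integral>\<^sup>+x. G x * indicator fund x \<partial>lborel)"
    by (intro nn_integral_cong glue_fund)
  finally show ?thesis ..
qed

lemma AE_indicator_unit_cube_eq_fund:
  "AE x in lborel. indicator (cbox (0::real^'d) One) x = (indicator fund x :: ennreal)"
proof -
  let ?N = "\<Union>i. {x::real^'d. x $ i = 1}"
  have "{x::real^'d. x $ i = 1} \<in> null_sets lborel" for i
  proof -
    have "{x::real^'d. x $ i = 1} = {x. axis i 1 \<bullet> x = 1}"
      by (auto simp: cart_eq_inner_axis inner_commute)
    then have "{x::real^'d. x $ i = 1} \<in> null_sets lebesgue"
      using negligible_hyperplane[of "axis i (1::real)" 1] by (simp add: axis_eq_0_iff negligible_iff_null_sets)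
    moreover have "{x::real^'d. x $ i = 1} \<in> sets borel"
      by (intro borel_closed closed_Collect_eq) (auto intro: continuous_intros)
    ultimately show ?thesis
      by (metis null_sets_completion_iff sets_lborel)
  qed
  then have "?N \<in> null_sets lborel"
    by auto
  moreover have "{x. indicator (cbox (0::real^'d) One) x \<noteq> (indicator fund x :: ennreal)} \<subseteq> ?N"
  proof
    fix x :: "real^'d"
    assume "x \<in> {x. indicator (cbox 0 One) x \<noteq> (indicator fund x :: ennreal)}"
    then have "x \<in> cbox 0 One" "x \<notin> fund"
      using fund_subset_unit_cube by (auto simp: indicator_def of_bool_def split: if_splits)
    then obtain i where "\<not> (0 \<le> x $ i \<and> x $ i < 1)"
      by (auto simp: fund_def)
    moreover have "0 \<le> x $ i \<and> x $ i \<le> 1"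
      using \<open>x \<in> cbox 0 One\<close> by (simp add: mem_box_cart)
    ultimately show "x \<in> ?N"
      by auto
  qed
  ultimately show ?thesis
    by (intro AE_I'[of ?N]) auto
qed

lemma integral_unit_cube_eq_nn_integral_fund:
  fixes f :: "real^'d \<Rightarrow> real"
  assumes [measurable]: "f \<in> borel_measurable borel" and nonneg: "\<And>x. 0 \<le> f x"
    and bounded: "\<And>x. x \<in> cbox 0 One \<Longrightarrow> f x \<le> C"
  shows "ennreal (integral (cbox 0 One) f) = (\<integral>\<^sup>+x. ennreal (f x) * indicator fund x \<partial>lborel)"
proof -
  have "(\<integral>\<^sup>+x. ennreal (f x) * indicator (cbox 0 One) x \<partial>lborel)
      \<le> (\<integral>\<^sup>+x. ennreal C * indicator (cbox (0::real^'d) One) x \<partial>lborel)"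
    using bounded by (intro nn_integral_mono) (auto simp: indicator_def ennreal_leI)
  also have "\<dots> < \<infinity>"
    by (simp add: nn_integral_cmult_indicator ennreal_mult_less_top)
  finally have "(\<integral>\<^sup>+x\<in>cbox 0 One. f x \<partial>lborel) = integral (cbox 0 One) f"
    using nonneg by (intro set_nn_integral_lborel_eq_integral) (auto simp: set_borel_measurable_def mult.commute)
  then have "ennreal (integral (cbox 0 One) f) = (\<integral>\<^sup>+x. ennreal (f x) * indicator (cbox 0 One) x \<partial>lborel)"
    by (simp add: mult.commute)
  also have "\<dots> = (\<integral>\<^sup>+x. ennreal (f x) * indicator fund x \<partial>lborel)"
    by (rule nn_integral_cong_AE) (use AE_indicator_unit_cube_eq_fund in \<open>auto elim: AE_mp\<close>)
  finally show ?thesis .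
qed

lemma nn_integral_indicator_ge:
  assumes "B \<in> sets M" "B' \<subseteq> B" "B' \<in> sets M" "0 \<le> c" "\<And>u. u \<in> B \<Longrightarrow> c \<le> f u"
  shows "ennreal c * emeasure M B' \<le> (\<integral>\<^sup>+u. ennreal (f u) * indicator B u \<partial>M)"
proof -
  have "ennreal c * emeasure M B' = (\<integral>\<^sup>+u. ennreal c * indicator B' u \<partial>M)"
    using assms by (simp add: nn_integral_cmult_indicator)
  also have "\<dots> \<le> (\<integral>\<^sup>+u. ennreal (f u) * indicator B u \<partial>M)"
    using assms by (intro nn_integral_mono) (auto simp: indicator_def intro: ennreal_leI)
  finally show ?thesis .
qed

lemma nn_integral_indicator_le:
  assumes "B' \<in> sets M" "B \<subseteq> B'" "\<And>u. u \<in> B \<Longrightarrow> f u \<le> c"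
  shows "(\<integral>\<^sup>+u. ennreal (f u) * indicator B u \<partial>M) \<le> ennreal c * emeasure M B'"
proof -
  have "(\<integral>\<^sup>+u. ennreal (f u) * indicator B u \<partial>M) \<le> (\<integral>\<^sup>+u. ennreal c * indicator B' u \<partial>M)"
    using assms by (intro nn_integral_mono) (auto simp: indicator_def intro: ennreal_leI)
  also have "\<dots> = ennreal c * emeasure M B'"
    using assms by (simp add: nn_integral_cmult_indicator)
  finally show ?thesis .
qed

text \<open>\<open>lattice_ball x r\<close> is the lift to \<open>\<real>^d\<close> of the ball of radius \<open>r\<close> around \<open>x\<close> on the torus.\<close>

definition lattice_ball :: "real^'d \<Rightarrow> real \<Rightarrow> (real^'d) set" where
  "lattice_ball x r = {z. \<exists>j. int_vec j \<and> dist z (x + j) < r}"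

lemma lattice_ball_translate:
  assumes "int_vec k"
  shows "z + k \<in> lattice_ball x r \<longleftrightarrow> z \<in> lattice_ball x r"
proof
  assume "z + k \<in> lattice_ball x r"
  then obtain j where "int_vec j" "dist (z + k) (x + j) < r"
    by (auto simp: lattice_ball_def)
  moreover have "dist z (x + (j - k)) = dist (z + k) (x + j)"
    by (simp add: dist_norm algebra_simps)
  ultimately show "z \<in> lattice_ball x r"
    using assms by (auto simp: lattice_ball_def)
next
  assume "z \<in> lattice_ball x r"
  then obtain j where "int_vec j" "dist z (x + j) < r"
    by (auto simp: lattice_ball_def)
  moreover have "dist (z + k) (x + (j + k)) = dist z (x + j)"
    by (simp add: dist_norm algebra_simps)
  ultimately show "z + k \<in> lattice_ball x r"
    using assms by (auto simp: lattice_ball_def)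
qed

lemma open_lattice_ball: "open (lattice_ball x r)"
proof -
  have "lattice_ball x r = (\<Union>j\<in>{j. int_vec j}. ball (x + j) r)"
    by (auto simp: lattice_ball_def dist_commute)
  then show ?thesis
    by auto
qed

lemma lattice_ball_borel [measurable]: "lattice_ball x r \<in> sets borel"
  by (simp add: open_lattice_ball)

lemma ball_subset_lattice_ball: "ball x r \<subseteq> lattice_ball x r"
  by (force simp: lattice_ball_def dist_commute)

lemma lattice_ball_near_lattice_point:
  assumes "int_vec (w - x)" "dist z w < 1/2" "r \<le> 1/2"
  shows "z \<in> lattice_ball x r \<longleftrightarrow> dist z w < r"
proof
  assume "z \<in> lattice_ball x r"
  then obtain j where j: "int_vec j" "dist z (x + j) < r"
    by (auto simp: lattice_ball_def)
  have "norm (x + j - w) \<le> dist z (x + j) + dist z w"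
    using dist_triangle[of "x + j" w z] by (simp add: dist_norm norm_minus_commute)
  then have "norm (x + j - w) < 1"
    using j(2) assms(2,3) by linarith
  moreover have "int_vec (x + j - w)"
    using int_vec_diff[OF j(1) assms(1)] by (simp add: algebra_simps)
  ultimately have "x + j = w"
    using int_vec_norm_less_one_eq_0 by force
  then show "dist z w < r"
    using j(2) by simp
next
  assume "dist z w < r"
  then show "z \<in> lattice_ball x r"
    using assms(1) by (auto simp: lattice_ball_def intro!: exI[of _ "w - x"])
qed

lemma nn_integral_fund_lattice_ball:
  fixes f :: "real^'d \<Rightarrow> ennreal"
  assumes [measurable]: "f \<in> borel_measurable borel"
    and f_periodic: "\<And>x k. int_vec k \<Longrightarrow> f (x + k) = f x"
    and "r \<le> 1/2"
  shows "(\<integral>\<^sup>+u. f u * indicator (lattice_ball x r) u * indicator fund u \<partial>lborel)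
       = (\<integral>\<^sup>+u. f u * indicator (ball x r) u \<partial>lborel)"
proof -
  have "(\<integral>\<^sup>+u. f u * indicator (lattice_ball x r) u * indicator fund u \<partial>lborel)
      = (\<integral>\<^sup>+u. f u * indicator (lattice_ball x r) u * indicator (ball x r) u \<partial>lborel)"
  proof (rule nn_integral_fund_eq_fundamental_set)
    show "f (u + k) * indicator (lattice_ball x r) (u + k) = f u * indicator (lattice_ball x r) u"
      if "int_vec k" for u k
      using that f_periodic[OF that] lattice_ball_translate[OF that] by (simp add: indicator_def)
    show "k = 0" if "u \<in> ball x r" "u + k \<in> ball x r" "int_vec k" for u k
    proof -
      have "norm k \<le> dist (u + k) x + dist u x"
        using dist_triangle[of "u + k" u x] by (simp add: dist_norm norm_minus_commute)
      also have "\<dots> < 1"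
        using that assms(3) by (simp add: dist_commute)
      finally show ?thesis
        using int_vec_norm_less_one_eq_0 that(3) by blast
    qed
    show "\<exists>k. int_vec k \<and> u + k \<in> ball x r"
      if "f u * indicator (lattice_ball x r) u \<noteq> 0" for u
    proof -
      have "u \<in> lattice_ball x r"
        using that by (auto simp: indicator_def split: if_splits)
      then obtain j where "int_vec j" "dist u (x + j) < r"
        by (auto simp: lattice_ball_def)
      moreover have "dist x (u + - j) = dist u (x + j)"
        by (simp add: dist_norm algebra_simps norm_minus_commute)
      ultimately show ?thesis
        by (intro exI[of _ "- j"]) auto
    qed
  qed auto
  also have "\<dots> = (\<integral>\<^sup>+u. f u * indicator (ball x r) u \<partial>lborel)"
    using ball_subset_lattice_ball[of x r] by (intro nn_integral_cong) (auto simp: indicator_def)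
  finally show ?thesis .
qed

section \<open>Local diffeomorphisms of the torus\<close>

locale torus_local_diffeo =
  fixes S :: "real^'d \<Rightarrow> real^'d" and S' :: "real^'d \<Rightarrow> real^'d \<Rightarrow> real^'d"
  assumes has_derivative_S: "\<And>y. (S has_derivative S' y) (at y)"
    and S'_eq_0D: "\<And>y v. S' y v = 0 \<Longrightarrow> v = 0"
    and int_vec_S_translate: "\<And>x k. int_vec k \<Longrightarrow> int_vec (S (x + k) - S x)"
begin

definition fibre :: "real^'d \<Rightarrow> (real^'d) set" where
  "fibre x = {y \<in> fund. int_vec (S y - x)}"

lemma continuous_on_S: "continuous_on UNIV S"
  using has_derivative_S has_derivative_continuous continuous_at_imp_continuous_on by blast

lemma S_borel [measurable]: "S \<in> borel_measurable borel"
  using continuous_on_S by (intro borel_measurable_continuous_onI) simp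

lemma linear_S': "linear (S' y)"
  using has_derivative_S[of y] has_derivative_bounded_linear bounded_linear.linear by blast

lemma inj_S': "inj (S' y)"
  using linear_S' linear_injective_0 S'_eq_0D by blast

lemma det_S'_pos: "0 < \<bar>det (matrix (S' y))\<bar>"
  using det_nz_iff_inj[OF linear_S'] inj_S' by simp

lemma S'_bounded_below: obtains \<beta> where "\<beta> > 0" "\<And>v. \<beta> * norm v \<le> norm (S' y v)"
  using linear_inj_bounded_below_pos[OF linear_S' inj_S'] by blast

lemma int_vec_S_translate_diff: "int_vec k \<Longrightarrow> int_vec (S u - x) \<Longrightarrow> int_vec (S (u + k) - x)"
  using int_vec_S_translate[of k u] int_vec_add[of "S (u + k) - S u" "S u - x"] by simp

lemma emeasure_S'_sublevel:
  assumes "0 \<le> a"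
  shows "emeasure lborel {u. norm (S' y (u - y)) < a}
       = ennreal (a ^ CARD('d) * measure lborel (ball (0::real^'d) 1) / \<bar>det (matrix (S' y))\<bar>)"
  using measure_linear_sublevel(2)[OF linear_S' inj_S' assms, of y]
    content_ball_conv_unit_ball[OF assms, of "0::real^'d"] by simp

lemma S_first_order:
  assumes "0 < \<theta>"
  obtains \<delta> where "\<delta> > 0" "\<And>u. dist u y < \<delta> \<Longrightarrow>
      (1 - \<theta>) * norm (S' y (u - y)) \<le> norm (S u - S y) \<and> norm (S u - S y) \<le> (1 + \<theta>) * norm (S' y (u - y))"
proof -
  obtain \<beta> where \<beta>: "\<beta> > 0" "\<And>v. \<beta> * norm v \<le> norm (S' y v)"
    using S'_bounded_below by blast
  obtain \<delta> where \<delta>: "\<delta> > 0"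
    "\<And>u. norm (u - y) < \<delta> \<Longrightarrow> norm (S u - S y - S' y (u - y)) \<le> (\<theta> * \<beta>) * norm (u - y)"
    using has_derivative_S[of y] assms \<beta>(1) unfolding has_derivative_at_alt by (meson mult_pos_pos)
  show ?thesis
  proof (rule that[OF \<delta>(1)])
    fix u
    assume "dist u y < \<delta>"
    then have "norm (S u - S y - S' y (u - y)) \<le> \<theta> * (\<beta> * norm (u - y))"
      using \<delta>(2)[of u] by (simp add: dist_norm mult.assoc)
    also have "\<dots> \<le> \<theta> * norm (S' y (u - y))"
      using \<beta>(2) assms by (intro mult_left_mono) auto
    finally have err: "norm (S u - S y - S' y (u - y)) \<le> \<theta> * norm (S' y (u - y))" .
    have "norm (S' y (u - y)) \<le> norm (S u - S y) + norm (S u - S y - S' y (u - y))"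
      using norm_triangle_ineq4[of "S u - S y" "S u - S y - S' y (u - y)"] by simp
    moreover have "norm (S u - S y) \<le> norm (S' y (u - y)) + norm (S u - S y - S' y (u - y))"
      using norm_triangle_ineq[of "S' y (u - y)" "S u - S y - S' y (u - y)"] by simp
    ultimately show "(1 - \<theta>) * norm (S' y (u - y)) \<le> norm (S u - S y)
        \<and> norm (S u - S y) \<le> (1 + \<theta>) * norm (S' y (u - y))"
      using err by (simp add: algebra_simps)
  qed
qed

lemma S_injective_mod_lattice_near:
  obtains \<delta> where "\<delta> > 0" "\<And>u. dist u y < \<delta> \<Longrightarrow> int_vec (S u - S y) \<Longrightarrow> u = y"
proof -
  obtain \<delta>1 where \<delta>1: "\<delta>1 > 0" "\<And>u. dist u y < \<delta>1 \<Longrightarrow> (1 - 1/2) * norm (S' y (u - y)) \<le> norm (S u - S y)"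
    using S_first_order[of "1/2" y] by (metis zero_less_divide_1_iff zero_less_numeral)
  obtain \<delta>2 where \<delta>2: "\<delta>2 > 0" "\<And>u. dist u y < \<delta>2 \<Longrightarrow> dist (S u) (S y) < 1"
    using continuous_on_S unfolding continuous_on_iff by (metis UNIV_I zero_less_one)
  show ?thesis
  proof (rule that[of "min \<delta>1 \<delta>2"])
    fix u
    assume u: "dist u y < min \<delta>1 \<delta>2" and "int_vec (S u - S y)"
    then have "S u - S y = 0"
      using \<delta>2(2)[of u] int_vec_norm_less_one_eq_0[of "S u - S y"] by (simp add: dist_norm)
    then have "S' y (u - y) = 0"
      using \<delta>1(2)[of u] u by simp
    then show "u = y"
      using S'_eq_0D by force
  qed (use \<delta>1 \<delta>2 in simp)
qed

lemma closed_int_vec_S_diff: "closed {q. int_vec (S q - x)}"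
proof -
  have "{q. int_vec (S q - x)} = (\<lambda>q. S q - x) -` {k. int_vec k}"
    by auto
  moreover have "continuous_on UNIV (\<lambda>q. S q - x)"
    using continuous_on_S by (intro continuous_intros)
  ultimately show ?thesis
    using closed_int_vec closed_vimage by metis
qed

lemma finite_fibre: "finite (fibre x)"
proof (rule ccontr)
  assume "infinite (fibre x)"
  moreover have "fibre x \<subseteq> cbox 0 One"
    using fund_subset_unit_cube by (auto simp: fibre_def)
  ultimately obtain y where y: "y islimpt fibre x"
    using compact_cbox[of "0::real^'d" One] unfolding compact_eq_Bolzano_Weierstrass by blast
  then have "y islimpt {q. int_vec (S q - x)}"
    by (rule islimpt_subset) (auto simp: fibre_def)
  then have y_fibre: "int_vec (S y - x)"
    using closed_int_vec_S_diff[of x] closed_limpt by blast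
  obtain \<delta> where \<delta>: "\<delta> > 0" "\<And>u. dist u y < \<delta> \<Longrightarrow> int_vec (S u - S y) \<Longrightarrow> u = y"
    using S_injective_mod_lattice_near by blast
  obtain p where "p \<in> fibre x" "p \<noteq> y" "dist p y < \<delta>"
    using y \<delta>(1) islimpt_approachable by blast
  moreover have "int_vec (S p - S y)"
    using \<open>p \<in> fibre x\<close> y_fibre int_vec_diff[of "S p - x" "S y - x"] by (auto simp: fibre_def)
  ultimately show False
    using \<delta>(2) by blast
qed

lemma fibre_separation:
  assumes "\<And>y. y \<in> fibre x \<Longrightarrow> \<delta> y > 0"
  obtains \<rho> where "\<rho> > 0" "\<And>y. y \<in> fibre x \<Longrightarrow> \<rho> \<le> \<delta> y"
    "\<And>y1 y2 k. y1 \<in> fibre x \<Longrightarrow> y2 \<in> fibre x \<Longrightarrow> int_vec k \<Longrightarrow> dist (y1 + k) y2 < 2 * \<rho> \<Longrightarrow> k = 0 \<and> y1 = y2"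
proof -
  have "\<forall>y. \<exists>\<eta>. \<eta> > 0 \<and> (\<forall>u. dist u y < \<eta> \<longrightarrow> int_vec (S u - S y) \<longrightarrow> u = y)"
    using S_injective_mod_lattice_near by blast
  then obtain \<eta> where "\<forall>y. \<eta> y > 0 \<and> (\<forall>u. dist u y < \<eta> y \<longrightarrow> int_vec (S u - S y) \<longrightarrow> u = y)"
    by (rule choice[THEN exE]) blast
  then have \<eta>: "\<And>y. \<eta> y > 0" "\<And>y u. dist u y < \<eta> y \<Longrightarrow> int_vec (S u - S y) \<Longrightarrow> u = y"
    by blast+
  define \<rho> where "\<rho> = Min (insert 1 ((\<lambda>y. min (\<delta> y) (\<eta> y / 2)) ` fibre x))"
  show ?thesis
  proof (rule that[of \<rho>])
    show "\<rho> > 0"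
      using finite_fibre assms \<eta>(1) by (auto simp: \<rho>_def)
    have \<rho>_le: "\<rho> \<le> min (\<delta> y) (\<eta> y / 2)" if "y \<in> fibre x" for y
      using finite_fibre that unfolding \<rho>_def by (intro Min_le) auto
    then show "\<rho> \<le> \<delta> y" if "y \<in> fibre x" for y
      using that by fastforce
    fix y1 y2 k
    assume y: "y1 \<in> fibre x" "y2 \<in> fibre x" and "int_vec k" "dist (y1 + k) y2 < 2 * \<rho>"
    have "\<rho> \<le> \<eta> y2 / 2"
      using \<rho>_le[OF y(2)] by simp
    moreover have "int_vec (S (y1 + k) - S y2)"
      using int_vec_S_translate_diff[OF \<open>int_vec k\<close>] y int_vec_diff[of _ "S y2 - x"]
      by (fastforce simp: fibre_def)
    ultimately have "y1 + k = y2"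
      using \<eta>(2) \<open>dist (y1 + k) y2 < 2 * \<rho>\<close> by force
    then show "k = 0 \<and> y1 = y2"
      using fund_translate_eq_0[of y1 k] y \<open>int_vec k\<close> by (auto simp: fibre_def)
  qed
qed

lemma disjoint_fibre_balls:
  assumes separated: "\<And>y1 y2 k. y1 \<in> fibre x \<Longrightarrow> y2 \<in> fibre x \<Longrightarrow> int_vec k \<Longrightarrow>
      dist (y1 + k) y2 < 2 * \<rho> \<Longrightarrow> k = 0 \<and> y1 = y2"
  shows "disjoint_family_on (\<lambda>y. ball y \<rho>) (fibre x)"
  unfolding disjoint_family_on_def
proof (intro ballI impI, rule ccontr)
  fix y1 y2
  assume y: "y1 \<in> fibre x" "y2 \<in> fibre x" "y1 \<noteq> y2" "ball y1 \<rho> \<inter> ball y2 \<rho> \<noteq> {}"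
  then obtain u where "dist y1 u < \<rho>" "dist y2 u < \<rho>"
    by auto
  then have "dist (y1 + 0) y2 < 2 * \<rho>"
    using dist_triangle[of y1 y2 u] by (simp add: dist_commute)
  then show False
    using separated[OF y(1,2) int_vec_zero] y(3) by blast
qed

text \<open>Points whose image is close to \<open>x\<close> on the torus lie close to the fibre over \<open>x\<close>: outside the
  \<open>\<rho>\<close>-neighbourhood of the closed set \<open>S\<^sup>-\<^sup>1(x + \<int>\<^sup>d)\<close>, the distance of \<open>S u\<close> to \<open>x + \<int>\<^sup>d\<close> is a
  positive continuous function on a compact fundamental domain.\<close>

lemma near_fibre:
  assumes "\<rho> > 0"
  obtains r0 where "r0 > 0"
    "\<And>u. S u \<in> lattice_ball x r0 \<Longrightarrow> \<exists>y\<in>fibre x. \<exists>k. int_vec k \<and> dist (u + k) y < \<rho>"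
proof -
  define Q where "Q = {q. int_vec (S q - x)}"
  define \<Lambda> where "\<Lambda> = {z::real^'d. int_vec (z - x)}"
  define K where "K = cbox 0 One \<inter> (\<Inter>q\<in>Q. {u. \<rho> \<le> dist u q})"
  have "\<Lambda> = (\<lambda>z. z - x) -` {k. int_vec k}"
    by (auto simp: \<Lambda>_def)
  then have "closed \<Lambda>"
    using continuous_closed_vimage[OF closed_int_vec, of "\<lambda>z. z - x"] by (simp add: continuous_intros)
  have "x \<in> \<Lambda>"
    by (simp add: \<Lambda>_def)
  have "compact K"
    unfolding K_def
    by (intro compact_Int_closed compact_cbox closed_INT ballI closed_Collect_le) (auto intro: continuous_intros)
  have K_pos: "0 < infdist (S u) \<Lambda>" if "u \<in> K" for u
  proof (rule infdist_pos_not_in_closed[OF \<open>closed \<Lambda>\<close>])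
    show "S u \<notin> \<Lambda>"
      using that assms by (auto simp: K_def Q_def \<Lambda>_def)
  qed (use \<open>x \<in> \<Lambda>\<close> in auto)
  obtain r0 where r0: "r0 > 0" "\<And>u. u \<in> K \<Longrightarrow> r0 \<le> infdist (S u) \<Lambda>"
  proof (cases "K = {}")
    case False
    have "continuous_on K (\<lambda>u. infdist (S u) \<Lambda>)"
      using continuous_on_S by (intro continuous_on_infdist) (auto intro: continuous_on_subset)
    then obtain um where "um \<in> K" "\<And>v. v \<in> K \<Longrightarrow> infdist (S um) \<Lambda> \<le> infdist (S v) \<Lambda>"
      using continuous_attains_inf[OF \<open>compact K\<close> False] by blast
    then show ?thesis
      using that[of "infdist (S um) \<Lambda>"] K_pos by blast
  qed (use that[of 1] in auto)
  show ?thesis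
  proof (rule that[OF r0(1)])
    fix u
    assume "S u \<in> lattice_ball x r0"
    define u' where "u' = u - floor_vec u"
    have "int_vec (S u' - S u)"
      using int_vec_S_translate[of "- floor_vec u" u] by (auto simp: u'_def)
    then have "S u' \<in> lattice_ball x r0"
      using lattice_ball_translate[of "S u' - S u" "S u"] \<open>S u \<in> lattice_ball x r0\<close> by simp
    then obtain j where "int_vec j" "dist (S u') (x + j) < r0"
      by (auto simp: lattice_ball_def)
    then have "infdist (S u') \<Lambda> < r0"
      using infdist_le[of "x + j" \<Lambda> "S u'"] by (simp add: \<Lambda>_def)
    moreover have "u' \<in> cbox 0 One"
      using diff_floor_vec_in_fund fund_subset_unit_cube by (auto simp: u'_def)
    ultimately obtain q where q: "q \<in> Q" "dist u' q < \<rho>"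
      using r0(2)[of u'] by (force simp: K_def not_le)
    define y where "y = q - floor_vec q"
    have "y \<in> fibre x"
      using int_vec_S_translate_diff[of "- floor_vec q" q x] q(1) diff_floor_vec_in_fund[of q]
      by (simp add: fibre_def Q_def y_def int_vec_minus)
    moreover have "dist (u + (- floor_vec u - floor_vec q)) y < \<rho>"
      using q(2) by (simp add: y_def u'_def dist_norm algebra_simps)
    ultimately show "\<exists>y\<in>fibre x. \<exists>k. int_vec k \<and> dist (u + k) y < \<rho>"
      by blast
  qed
qed

lemma S'_sublevel_sandwich:
  assumes "0 < \<epsilon>" "\<epsilon> < 1"
    and first_order: "\<And>u. dist u y < \<rho> \<Longrightarrow>
      (1 - \<epsilon>) * norm (S' y (u - y)) \<le> norm (S u - S y) \<and> norm (S u - S y) \<le> (1 + \<epsilon>) * norm (S' y (u - y))"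
    and \<beta>: "\<And>v. \<beta> * norm v \<le> norm (S' y v)" "0 < \<beta>" and "r \<le> \<beta> * \<rho>"
  shows "{u. norm (S' y (u - y)) < r / (1 + \<epsilon>)} \<subseteq> {u. dist u y < \<rho> \<and> dist (S u) (S y) < r}"
    and "{u. dist u y < \<rho> \<and> dist (S u) (S y) < r} \<subseteq> {u. norm (S' y (u - y)) < r / (1 - \<epsilon>)}"
proof safe
  fix u
  assume u: "norm (S' y (u - y)) < r / (1 + \<epsilon>)"
  have "0 < r / (1 + \<epsilon>)"
    using u by (meson le_less_trans norm_ge_zero)
  then have "r / (1 + \<epsilon>) \<le> r"
    using assms(1) by (simp add: zero_less_divide_iff divide_le_eq)
  then have "\<beta> * norm (u - y) < \<beta> * \<rho>"
    using \<beta>(1)[of "u - y"] u \<open>r \<le> \<beta> * \<rho>\<close> by linarith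
  then show "dist u y < \<rho>"
    using \<beta>(2) by (simp add: dist_norm)
  then have "norm (S u - S y) \<le> (1 + \<epsilon>) * norm (S' y (u - y))"
    using first_order by blast
  also have "\<dots> < r"
    using u assms(1) by (simp add: less_divide_eq mult.commute)
  finally show "dist (S u) (S y) < r"
    by (simp add: dist_norm)
next
  fix u
  assume "dist u y < \<rho>" "dist (S u) (S y) < r"
  then have "(1 - \<epsilon>) * norm (S' y (u - y)) < r"
    using first_order[of u] by (simp add: dist_norm)
  then show "norm (S' y (u - y)) < r / (1 - \<epsilon>)"
    using assms(2) by (simp add: less_divide_eq mult.commute)
qed

end

section \<open>The transfer identity for an invariant density\<close>

lemma emeasure_lborel_ball_vec:
  assumes "0 \<le> r"
  shows "emeasure lborel (ball (x::real^'d) r) = ennreal (r ^ CARD('d) * measure lborel (ball (0::real^'d) 1))"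
  using emeasure_lborel_ball_finite[of x r] content_ball_conv_unit_ball[OF assms, of x]
  by (simp add: emeasure_eq_ennreal_measure)

lemma scaled_le_cancel:
  fixes V q s t :: real
  assumes "V / q * s \<le> V * t" "0 < V" "0 < q"
  shows "s \<le> q * t"
proof -
  have "V * (s / q) \<le> V * t"
    using assms(1) by (simp add: field_simps)
  then show ?thesis
    using assms(2,3) by (simp add: divide_le_eq mult.commute)
qed

lemma scaled_ge_cancel:
  fixes V q s t :: real
  assumes "V * t \<le> V / q * s" "0 < V" "0 < q"
  shows "q * t \<le> s"
proof -
  have "V * t \<le> V * (s / q)"
    using assms(1) by (simp add: field_simps)
  then show ?thesis
    using assms(2,3) by (simp add: le_divide_eq mult.commute)
qed

locale torus_local_diffeo_invariant_density = torus_local_diffeo S S'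
  for S :: "real^'d \<Rightarrow> real^'d" and S' +
  fixes h :: "real^'d \<Rightarrow> real"
  assumes continuous_on_h: "continuous_on UNIV h"
    and h_periodic: "\<And>x k. int_vec k \<Longrightarrow> h (x + k) = h x"
    and h_pos: "\<And>x. 0 < h x"
    and h_invariant: "\<And>A. A \<in> sets borel \<Longrightarrow> (\<And>z k. int_vec k \<Longrightarrow> z + k \<in> A \<longleftrightarrow> z \<in> A) \<Longrightarrow>
      (\<integral>\<^sup>+u. ennreal (h u) * indicator A (S u) * indicator fund u \<partial>lborel)
        = (\<integral>\<^sup>+u. ennreal (h u) * indicator A u * indicator fund u \<partial>lborel)"
begin

lemma h_borel [measurable]: "h \<in> borel_measurable borel"
  using continuous_on_h by (intro borel_measurable_continuous_onI) simp

lemma local_control: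
  assumes "0 < \<epsilon>"
  obtains \<rho> where "\<rho> > 0" "\<And>u. dist u y < \<rho> \<Longrightarrow>
      (1 - \<epsilon>) * norm (S' y (u - y)) \<le> norm (S u - S y) \<and> norm (S u - S y) \<le> (1 + \<epsilon>) * norm (S' y (u - y))"
    "\<And>u. dist u y < \<rho> \<Longrightarrow> \<bar>h u - h y\<bar> \<le> \<epsilon>" "\<And>u. dist u y < \<rho> \<Longrightarrow> dist (S u) (S y) < 1/2"
proof -
  obtain \<delta>1 where \<delta>1: "\<delta>1 > 0" "\<And>u. dist u y < \<delta>1 \<Longrightarrow>
      (1 - \<epsilon>) * norm (S' y (u - y)) \<le> norm (S u - S y) \<and> norm (S u - S y) \<le> (1 + \<epsilon>) * norm (S' y (u - y))"
    using S_first_order[OF assms] by blast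
  obtain \<delta>2 where \<delta>2: "\<delta>2 > 0" "\<And>u. dist u y < \<delta>2 \<Longrightarrow> dist (h u) (h y) < \<epsilon>"
    using continuous_on_h assms unfolding continuous_on_iff by (metis UNIV_I)
  obtain \<delta>3 where \<delta>3: "\<delta>3 > 0" "\<And>u. dist u y < \<delta>3 \<Longrightarrow> dist (S u) (S y) < 1/2"
    using continuous_on_S unfolding continuous_on_iff by (metis UNIV_I zero_less_divide_1_iff zero_less_numeral)
  show ?thesis
    using that[of "min \<delta>1 (min \<delta>2 \<delta>3)"] \<delta>1 \<delta>2 \<delta>3 by (force simp: dist_real_def)
qed

lemma nn_integral_lattice_ball_preimage:
  assumes "0 < r" "r \<le> 1/2" "0 < \<rho>"
    and separated: "\<And>y1 y2 k. y1 \<in> fibre x \<Longrightarrow> y2 \<in> fibre x \<Longrightarrow> int_vec k \<Longrightarrow>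
      dist (y1 + k) y2 < 2 * \<rho> \<Longrightarrow> k = 0 \<and> y1 = y2"
    and close: "\<And>y u. y \<in> fibre x \<Longrightarrow> dist u y < \<rho> \<Longrightarrow> dist (S u) (S y) < 1/2"
    and covered: "\<And>u. S u \<in> lattice_ball x r \<Longrightarrow> \<exists>y\<in>fibre x. \<exists>k. int_vec k \<and> dist (u + k) y < \<rho>"
  shows "(\<integral>\<^sup>+u. ennreal (h u) * indicator (lattice_ball x r) (S u) * indicator fund u \<partial>lborel)
       = (\<Sum>y\<in>fibre x. \<integral>\<^sup>+u. ennreal (h u) * indicator {u. dist u y < \<rho> \<and> dist (S u) (S y) < r} u \<partial>lborel)"
proof -
  define E where "E = (\<Union>y\<in>fibre x. ball y \<rho>)"
  define G where "G u = ennreal (h u) * indicator (lattice_ball x r) (S u)" for u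
  have disjoint: "disjoint_family_on (\<lambda>y. ball y \<rho>) (fibre x)"
    using separated by (rule disjoint_fibre_balls)
  have "(\<integral>\<^sup>+u. G u * indicator fund u \<partial>lborel) = (\<integral>\<^sup>+u. G u * indicator E u \<partial>lborel)"
  proof (rule nn_integral_fund_eq_fundamental_set)
    show "G (u + k) = G u" if "int_vec k" for u k
    proof -
      have "S (u + k) = S u + (S (u + k) - S u)"
        by simp
      then show ?thesis
        using h_periodic[OF that] lattice_ball_translate[OF int_vec_S_translate[OF that, of u], of "S u" x r]
        by (simp add: G_def indicator_def)
    qed
    show "E \<in> sets borel" "bounded E"
      unfolding E_def using finite_fibre by auto
    show "k = 0" if uk: "u \<in> E" "u + k \<in> E" "int_vec k" for u k
    proof -
      obtain y1 where y1: "y1 \<in> fibre x" "dist y1 u < \<rho>"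
        using uk(1) unfolding E_def by auto
      obtain y2 where y2: "y2 \<in> fibre x" "dist y2 (u + k) < \<rho>"
        using uk(2) unfolding E_def by auto
      note y = y1 y2
      have "dist (y1 + k) y2 \<le> dist (y1 + k) (u + k) + dist (u + k) y2"
        by (rule dist_triangle)
      then have "dist (y1 + k) y2 < 2 * \<rho>"
        using y by (simp add: dist_commute dist_norm)
      then show ?thesis
        using separated[OF y(1,3) uk(3)] by blast
    qed
    show "\<exists>k. int_vec k \<and> u + k \<in> E" if "G u \<noteq> 0" for u
      using covered[of u] that by (force simp: G_def E_def dist_commute)
  qed (auto simp: G_def E_def)
  also have "\<dots> = (\<Sum>y\<in>fibre x. \<integral>\<^sup>+u. G u * indicator (ball y \<rho>) u \<partial>lborel)"
    unfolding E_def indicator_UN_disjoint[OF finite_fibre disjoint] sum_distrib_left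
  proof (rule nn_integral_sum)
    fix y :: "real^'d"
    have [measurable]: "ball y \<rho> \<in> sets borel"
      by simp
    show "(\<lambda>u. G u * indicator (ball y \<rho>) u) \<in> borel_measurable lborel"
      unfolding G_def by measurable
  qed
  also have "\<dots> = (\<Sum>y\<in>fibre x. \<integral>\<^sup>+u. ennreal (h u) * indicator {u. dist u y < \<rho> \<and> dist (S u) (S y) < r} u \<partial>lborel)"
  proof (intro sum.cong refl nn_integral_cong)
    fix y u
    assume "y \<in> fibre x"
    then have "int_vec (S y - x)"
      by (simp add: fibre_def)
    then have "dist u y < \<rho> \<Longrightarrow> S u \<in> lattice_ball x r \<longleftrightarrow> dist (S u) (S y) < r"
      using lattice_ball_near_lattice_point close[OF \<open>y \<in> fibre x\<close>] assms(2) by blast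
    then show "G u * indicator (ball y \<rho>) u = ennreal (h u) * indicator {u. dist u y < \<rho> \<and> dist (S u) (S y) < r} u"
      by (auto simp: G_def indicator_def dist_commute)
  qed
  finally show ?thesis
    by (simp add: G_def mult.assoc)
qed

text \<open>The scales are chosen in this order: radii \<open>\<rho>\<close> around the fibre points on which \<open>S\<close> is
  \<open>\<epsilon>\<close>-close to its linearisation and \<open>h\<close> is \<open>\<epsilon>\<close>-close to constant, then a radius \<open>r\<close> on the target
  small enough that the preimage of \<open>lattice_ball x r\<close> lies in the \<open>\<rho>\<close>-balls.\<close>

lemma fibre_scales:
  assumes "0 < \<epsilon>" "\<epsilon> < 1/2"
  obtains \<rho> r where "0 < \<rho>" "0 < r" "r \<le> 1/2"
    "\<And>y1 y2 k. y1 \<in> fibre x \<Longrightarrow> y2 \<in> fibre x \<Longrightarrow> int_vec k \<Longrightarrow> dist (y1 + k) y2 < 2 * \<rho> \<Longrightarrow> k = 0 \<and> y1 = y2"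
    "\<And>y u. y \<in> fibre x \<Longrightarrow> dist u y < \<rho> \<Longrightarrow> dist (S u) (S y) < 1/2 \<and> \<bar>h u - h y\<bar> \<le> \<epsilon>"
    "\<And>u. S u \<in> lattice_ball x r \<Longrightarrow> \<exists>y\<in>fibre x. \<exists>k. int_vec k \<and> dist (u + k) y < \<rho>"
    "\<And>u. u \<in> ball x r \<Longrightarrow> \<bar>h u - h x\<bar> \<le> \<epsilon>"
    "\<And>y. y \<in> fibre x \<Longrightarrow> {u. norm (S' y (u - y)) < r / (1 + \<epsilon>)} \<subseteq> {u. dist u y < \<rho> \<and> dist (S u) (S y) < r}"
    "\<And>y. y \<in> fibre x \<Longrightarrow> {u. dist u y < \<rho> \<and> dist (S u) (S y) < r} \<subseteq> {u. norm (S' y (u - y)) < r / (1 - \<epsilon>)}"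
proof -
  have "\<forall>y. \<exists>\<rho>. \<rho> > 0 \<and> (\<forall>u. dist u y < \<rho> \<longrightarrow>
      ((1 - \<epsilon>) * norm (S' y (u - y)) \<le> norm (S u - S y) \<and> norm (S u - S y) \<le> (1 + \<epsilon>) * norm (S' y (u - y)))
      \<and> \<bar>h u - h y\<bar> \<le> \<epsilon> \<and> dist (S u) (S y) < 1/2)"
    by (metis local_control[OF assms(1)])
  then obtain rad where rad: "\<And>y. rad y > 0" "\<And>y u. dist u y < rad y \<Longrightarrow>
      ((1 - \<epsilon>) * norm (S' y (u - y)) \<le> norm (S u - S y) \<and> norm (S u - S y) \<le> (1 + \<epsilon>) * norm (S' y (u - y)))
      \<and> \<bar>h u - h y\<bar> \<le> \<epsilon> \<and> dist (S u) (S y) < 1/2"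
    by metis
  obtain \<rho> where \<rho>: "\<rho> > 0" "\<And>y. y \<in> fibre x \<Longrightarrow> \<rho> \<le> rad y"
    "\<And>y1 y2 k. y1 \<in> fibre x \<Longrightarrow> y2 \<in> fibre x \<Longrightarrow> int_vec k \<Longrightarrow> dist (y1 + k) y2 < 2 * \<rho> \<Longrightarrow> k = 0 \<and> y1 = y2"
    using fibre_separation[of x rad] rad(1) by metis
  have near: "\<And>y u. y \<in> fibre x \<Longrightarrow> dist u y < \<rho> \<Longrightarrow>
      ((1 - \<epsilon>) * norm (S' y (u - y)) \<le> norm (S u - S y) \<and> norm (S u - S y) \<le> (1 + \<epsilon>) * norm (S' y (u - y)))
      \<and> \<bar>h u - h y\<bar> \<le> \<epsilon> \<and> dist (S u) (S y) < 1/2"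
    using rad(2) \<rho>(2) by (meson less_le_trans)
  have "\<forall>y. \<exists>\<beta>. \<beta> > 0 \<and> (\<forall>v. \<beta> * norm v \<le> norm (S' y v))"
    using S'_bounded_below by metis
  then obtain \<beta> where \<beta>: "\<And>y. \<beta> y > 0" "\<And>y v. \<beta> y * norm v \<le> norm (S' y v)"
    by metis
  obtain r0 where r0: "r0 > 0" "\<And>u. S u \<in> lattice_ball x r0 \<Longrightarrow> \<exists>y\<in>fibre x. \<exists>k. int_vec k \<and> dist (u + k) y < \<rho>"
    using near_fibre[OF \<rho>(1)] by metis
  obtain rh where rh: "rh > 0" "\<And>u. dist u x < rh \<Longrightarrow> \<bar>h u - h x\<bar> \<le> \<epsilon>"
    using continuous_on_h assms(1) unfolding continuous_on_iff dist_real_def by (metis UNIV_I less_imp_le)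
  define r where "r = Min (insert (1/2) (insert r0 (insert rh ((\<lambda>y. \<beta> y * \<rho>) ` fibre x))))"
  have "r > 0"
    using finite_fibre r0 rh \<beta> \<rho> by (auto simp: r_def)
  have "r \<le> z" if "z \<in> insert (1/2) (insert r0 (insert rh ((\<lambda>y. \<beta> y * \<rho>) ` fibre x)))" for z
    unfolding r_def using finite_fibre that by (intro Min_le) auto
  then have r_le: "r \<le> 1/2" "r \<le> r0" "r \<le> rh" "\<And>y. y \<in> fibre x \<Longrightarrow> r \<le> \<beta> y * \<rho>"
    by blast+
  show ?thesis
  proof (rule that[OF \<rho>(1) \<open>r > 0\<close> r_le(1) \<rho>(3)])
    show "\<exists>y\<in>fibre x. \<exists>k. int_vec k \<and> dist (u + k) y < \<rho>" if "S u \<in> lattice_ball x r" for u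
      using r0(2)[of u] that r_le(2) by (force simp: lattice_ball_def)
    show "\<bar>h u - h x\<bar> \<le> \<epsilon>" if "u \<in> ball x r" for u
      using rh(2)[of u] r_le(3) that by (simp add: dist_commute)
    fix y
    assume "y \<in> fibre x"
    then show "{u. norm (S' y (u - y)) < r / (1 + \<epsilon>)} \<subseteq> {u. dist u y < \<rho> \<and> dist (S u) (S y) < r}"
      and "{u. dist u y < \<rho> \<and> dist (S u) (S y) < r} \<subseteq> {u. norm (S' y (u - y)) < r / (1 - \<epsilon>)}"
      using S'_sublevel_sandwich[OF assms(1) _ _ \<beta>(2) \<beta>(1) r_le(4)] near assms(2) by auto
  qed (use near in auto)
qed

lemma sum_nn_integral_pieces_eq_ball:
  assumes "0 < \<rho>" "0 < r" "r \<le> 1/2"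
    and "\<And>y1 y2 k. y1 \<in> fibre x \<Longrightarrow> y2 \<in> fibre x \<Longrightarrow> int_vec k \<Longrightarrow> dist (y1 + k) y2 < 2 * \<rho> \<Longrightarrow> k = 0 \<and> y1 = y2"
    and "\<And>y u. y \<in> fibre x \<Longrightarrow> dist u y < \<rho> \<Longrightarrow> dist (S u) (S y) < 1/2"
    and "\<And>u. S u \<in> lattice_ball x r \<Longrightarrow> \<exists>y\<in>fibre x. \<exists>k. int_vec k \<and> dist (u + k) y < \<rho>"
  shows "(\<Sum>y\<in>fibre x. \<integral>\<^sup>+u. ennreal (h u) * indicator {u. dist u y < \<rho> \<and> dist (S u) (S y) < r} u \<partial>lborel)
       = (\<integral>\<^sup>+u. ennreal (h u) * indicator (ball x r) u \<partial>lborel)"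
proof -
  have "(\<Sum>y\<in>fibre x. \<integral>\<^sup>+u. ennreal (h u) * indicator {u. dist u y < \<rho> \<and> dist (S u) (S y) < r} u \<partial>lborel)
      = (\<integral>\<^sup>+u. ennreal (h u) * indicator (lattice_ball x r) (S u) * indicator fund u \<partial>lborel)"
    using nn_integral_lattice_ball_preimage[OF assms(2,3,1,4,5,6)] ..
  also have "\<dots> = (\<integral>\<^sup>+u. ennreal (h u) * indicator (lattice_ball x r) u * indicator fund u \<partial>lborel)"
    by (rule h_invariant) (auto simp: lattice_ball_translate)
  also have "\<dots> = (\<integral>\<^sup>+u. ennreal (h u) * indicator (ball x r) u \<partial>lborel)"
    using assms(3) by (intro nn_integral_fund_lattice_ball) (auto simp: h_periodic)
  finally show ?thesis .
qed

lemma sum_emeasure_S'_sublevel: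
  assumes "\<And>y. y \<in> fibre x \<Longrightarrow> 0 \<le> c y" "0 < q" "0 \<le> r"
  shows "(\<Sum>y\<in>fibre x. ennreal (c y) * emeasure lborel {u. norm (S' y (u - y)) < r / q})
       = ennreal (r ^ CARD('d) * measure lborel (ball (0::real^'d) 1) / q ^ CARD('d)
           * (\<Sum>y\<in>fibre x. c y / \<bar>det (matrix (S' y))\<bar>))"
proof -
  have "ennreal (c y) * emeasure lborel {u. norm (S' y (u - y)) < r / q}
      = ennreal (r ^ CARD('d) * measure lborel (ball (0::real^'d) 1) / q ^ CARD('d) * (c y / \<bar>det (matrix (S' y))\<bar>))"
    if "y \<in> fibre x" for y
    using assms that emeasure_S'_sublevel[of "r / q" y]
    by (simp add: ennreal_mult'[symmetric] power_divide mult.commute mult.left_commute)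
  moreover have "0 \<le> r ^ CARD('d) * measure lborel (ball (0::real^'d) 1) / q ^ CARD('d) * (c y / \<bar>det (matrix (S' y))\<bar>)"
    if "y \<in> fibre x" for y
    using assms that by simp
  ultimately show ?thesis
    by (simp add: sum_distrib_left sum_ennreal)
qed

lemma sum_fibre_density_le:
  assumes "0 < \<epsilon>" "\<epsilon> < 1/2" "\<And>y. y \<in> fibre x \<Longrightarrow> \<epsilon> \<le> h y"
  shows "(\<Sum>y\<in>fibre x. (h y - \<epsilon>) / \<bar>det (matrix (S' y))\<bar>) \<le> (1 + \<epsilon>) ^ CARD('d) * (h x + \<epsilon>)"
proof -
  obtain \<rho> r where "0 < \<rho>" "0 < r" "r \<le> 1/2"
    and separated: "\<And>y1 y2 k. y1 \<in> fibre x \<Longrightarrow> y2 \<in> fibre x \<Longrightarrow> int_vec k \<Longrightarrow> dist (y1 + k) y2 < 2 * \<rho> \<Longrightarrow> k = 0 \<and> y1 = y2"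
    and near: "\<And>y u. y \<in> fibre x \<Longrightarrow> dist u y < \<rho> \<Longrightarrow> dist (S u) (S y) < 1/2 \<and> \<bar>h u - h y\<bar> \<le> \<epsilon>"
    and covered: "\<And>u. S u \<in> lattice_ball x r \<Longrightarrow> \<exists>y\<in>fibre x. \<exists>k. int_vec k \<and> dist (u + k) y < \<rho>"
    and near_x: "\<And>u. u \<in> ball x r \<Longrightarrow> \<bar>h u - h x\<bar> \<le> \<epsilon>"
    and inner: "\<And>y. y \<in> fibre x \<Longrightarrow> {u. norm (S' y (u - y)) < r / (1 + \<epsilon>)} \<subseteq> {u. dist u y < \<rho> \<and> dist (S u) (S y) < r}"
    and outer: "\<And>y. y \<in> fibre x \<Longrightarrow> {u. dist u y < \<rho> \<and> dist (S u) (S y) < r} \<subseteq> {u. norm (S' y (u - y)) < r / (1 - \<epsilon>)}"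
    using fibre_scales[OF assms(1,2), of x] by blast
  have h_ball: "h x - \<epsilon> \<le> h u \<and> h u \<le> h x + \<epsilon>" if "dist x u < r" for u
    using near_x[of u] that unfolding abs_le_iff by simp
  define V where "V = r ^ CARD('d) * measure lborel (ball (0::real^'d) 1)"
  have "V > 0"
    using \<open>0 < r\<close> content_ball_pos[of 1 "0::real^'d"] by (simp add: V_def)
  have "ennreal (V / (1 + \<epsilon>) ^ CARD('d) * (\<Sum>y\<in>fibre x. (h y - \<epsilon>) / \<bar>det (matrix (S' y))\<bar>))
      = (\<Sum>y\<in>fibre x. ennreal (h y - \<epsilon>) * emeasure lborel {u. norm (S' y (u - y)) < r / (1 + \<epsilon>)})"
    unfolding V_def using assms \<open>0 < r\<close> by (intro sum_emeasure_S'_sublevel[symmetric]) auto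
  also have "\<dots> \<le> (\<Sum>y\<in>fibre x. \<integral>\<^sup>+u. ennreal (h u) * indicator {u. dist u y < \<rho> \<and> dist (S u) (S y) < r} u \<partial>lborel)"
  proof (intro sum_mono nn_integral_indicator_ge)
    fix y
    assume "y \<in> fibre x"
    then show "{u. norm (S' y (u - y)) < r / (1 + \<epsilon>)} \<in> sets lborel"
      and "{u. norm (S' y (u - y)) < r / (1 + \<epsilon>)} \<subseteq> {u. dist u y < \<rho> \<and> dist (S u) (S y) < r}"
      and "0 \<le> h y - \<epsilon>"
      using inner assms(1,3) \<open>0 < r\<close> measure_linear_sublevel(1)[OF linear_S' inj_S'] by auto
    show "h y - \<epsilon> \<le> h u" if "u \<in> {u. dist u y < \<rho> \<and> dist (S u) (S y) < r}" for u
      using near[OF \<open>y \<in> fibre x\<close>, of u] that by (simp add: abs_le_iff)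
  qed simp
  also have "\<dots> = (\<integral>\<^sup>+u. ennreal (h u) * indicator (ball x r) u \<partial>lborel)"
    by (rule sum_nn_integral_pieces_eq_ball[OF \<open>0 < \<rho>\<close> \<open>0 < r\<close> \<open>r \<le> 1/2\<close> separated])
      (use near covered in auto)
  also have "\<dots> \<le> ennreal (h x + \<epsilon>) * emeasure lborel (ball x r)"
    by (intro nn_integral_indicator_le) (auto dest: h_ball)
  also have "\<dots> = ennreal (V * (h x + \<epsilon>))"
    unfolding emeasure_lborel_ball_vec[OF less_imp_le[OF \<open>0 < r\<close>]] V_def[symmetric]
    using h_pos[of x] assms(1) by (subst ennreal_mult'[symmetric]) (auto simp: mult.commute)
  finally have "V / (1 + \<epsilon>) ^ CARD('d) * (\<Sum>y\<in>fibre x. (h y - \<epsilon>) / \<bar>det (matrix (S' y))\<bar>) \<le> V * (h x + \<epsilon>)"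
    using \<open>V > 0\<close> h_pos[of x] assms(1) by (subst (asm) ennreal_le_iff) auto
  then show ?thesis
    by (rule scaled_le_cancel) (use \<open>V > 0\<close> assms(1) in simp_all)
qed

lemma sum_fibre_density_ge:
  assumes "0 < \<epsilon>" "\<epsilon> < 1/2" "\<epsilon> \<le> h x"
  shows "(1 - \<epsilon>) ^ CARD('d) * (h x - \<epsilon>) \<le> (\<Sum>y\<in>fibre x. (h y + \<epsilon>) / \<bar>det (matrix (S' y))\<bar>)"
proof -
  obtain \<rho> r where "0 < \<rho>" "0 < r" "r \<le> 1/2"
    and separated: "\<And>y1 y2 k. y1 \<in> fibre x \<Longrightarrow> y2 \<in> fibre x \<Longrightarrow> int_vec k \<Longrightarrow> dist (y1 + k) y2 < 2 * \<rho> \<Longrightarrow> k = 0 \<and> y1 = y2"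
    and near: "\<And>y u. y \<in> fibre x \<Longrightarrow> dist u y < \<rho> \<Longrightarrow> dist (S u) (S y) < 1/2 \<and> \<bar>h u - h y\<bar> \<le> \<epsilon>"
    and covered: "\<And>u. S u \<in> lattice_ball x r \<Longrightarrow> \<exists>y\<in>fibre x. \<exists>k. int_vec k \<and> dist (u + k) y < \<rho>"
    and near_x: "\<And>u. u \<in> ball x r \<Longrightarrow> \<bar>h u - h x\<bar> \<le> \<epsilon>"
    and inner: "\<And>y. y \<in> fibre x \<Longrightarrow> {u. norm (S' y (u - y)) < r / (1 + \<epsilon>)} \<subseteq> {u. dist u y < \<rho> \<and> dist (S u) (S y) < r}"
    and outer: "\<And>y. y \<in> fibre x \<Longrightarrow> {u. dist u y < \<rho> \<and> dist (S u) (S y) < r} \<subseteq> {u. norm (S' y (u - y)) < r / (1 - \<epsilon>)}"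
    using fibre_scales[OF assms(1,2), of x] by blast
  have h_ball: "h x - \<epsilon> \<le> h u \<and> h u \<le> h x + \<epsilon>" if "dist x u < r" for u
    using near_x[of u] that unfolding abs_le_iff by simp
  define V where "V = r ^ CARD('d) * measure lborel (ball (0::real^'d) 1)"
  have "V > 0"
    using \<open>0 < r\<close> content_ball_pos[of 1 "0::real^'d"] by (simp add: V_def)
  have "ennreal (V * (h x - \<epsilon>)) = ennreal (h x - \<epsilon>) * emeasure lborel (ball x r)"
    unfolding emeasure_lborel_ball_vec[OF less_imp_le[OF \<open>0 < r\<close>]] V_def[symmetric]
    using assms(3) by (subst ennreal_mult'[symmetric]) (auto simp: mult.commute)
  also have "\<dots> \<le> (\<integral>\<^sup>+u. ennreal (h u) * indicator (ball x r) u \<partial>lborel)"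
    using assms(3) by (intro nn_integral_indicator_ge) (auto dest: h_ball)
  also have "\<dots> = (\<Sum>y\<in>fibre x. \<integral>\<^sup>+u. ennreal (h u) * indicator {u. dist u y < \<rho> \<and> dist (S u) (S y) < r} u \<partial>lborel)"
    by (rule sum_nn_integral_pieces_eq_ball[symmetric, OF \<open>0 < \<rho>\<close> \<open>0 < r\<close> \<open>r \<le> 1/2\<close> separated])
      (use near covered in auto)
  also have "\<dots> \<le> (\<Sum>y\<in>fibre x. ennreal (h y + \<epsilon>) * emeasure lborel {u. norm (S' y (u - y)) < r / (1 - \<epsilon>)})"
  proof (intro sum_mono nn_integral_indicator_le)
    fix y
    assume "y \<in> fibre x"
    then show "{u. norm (S' y (u - y)) < r / (1 - \<epsilon>)} \<in> sets lborel"
      and "{u. dist u y < \<rho> \<and> dist (S u) (S y) < r} \<subseteq> {u. norm (S' y (u - y)) < r / (1 - \<epsilon>)}"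
      using outer assms(2) \<open>0 < r\<close> measure_linear_sublevel(1)[OF linear_S' inj_S'] by auto
    show "h u \<le> h y + \<epsilon>" if "u \<in> {u. dist u y < \<rho> \<and> dist (S u) (S y) < r}" for u
      using near[OF \<open>y \<in> fibre x\<close>, of u] that by (simp add: abs_le_iff)
  qed
  also have "\<dots> = ennreal (V / (1 - \<epsilon>) ^ CARD('d) * (\<Sum>y\<in>fibre x. (h y + \<epsilon>) / \<bar>det (matrix (S' y))\<bar>))"
    unfolding V_def using assms \<open>0 < r\<close>
    by (intro sum_emeasure_S'_sublevel) (use add_pos_pos[OF h_pos assms(1)] in \<open>auto intro: less_imp_le\<close>)
  finally have "ennreal (V * (h x - \<epsilon>))
      \<le> ennreal (V / (1 - \<epsilon>) ^ CARD('d) * (\<Sum>y\<in>fibre x. (h y + \<epsilon>) / \<bar>det (matrix (S' y))\<bar>))" .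
  moreover have "0 \<le> V / (1 - \<epsilon>) ^ CARD('d) * (\<Sum>y\<in>fibre x. (h y + \<epsilon>) / \<bar>det (matrix (S' y))\<bar>)"
    using \<open>V > 0\<close> assms(2) add_pos_pos[OF h_pos assms(1)]
    by (intro mult_nonneg_nonneg sum_nonneg divide_nonneg_nonneg) (auto intro: less_imp_le)
  ultimately have "V * (h x - \<epsilon>) \<le> V / (1 - \<epsilon>) ^ CARD('d) * (\<Sum>y\<in>fibre x. (h y + \<epsilon>) / \<bar>det (matrix (S' y))\<bar>)"
    using ennreal_le_iff by blast
  then show ?thesis
    by (rule scaled_ge_cancel) (use \<open>V > 0\<close> assms(2) in simp_all)
qed

theorem sum_fibre_density_over_jacobian:
  "(\<Sum>y\<in>fibre x. h y / \<bar>det (matrix (S' y))\<bar>) = h x"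
proof -
  define J where "J y = \<bar>det (matrix (S' y))\<bar>" for y
  define d where "d = CARD('d)"
  have "J y \<noteq> 0" for y
    using det_S'_pos[of y] by (simp add: J_def)
  define \<epsilon>0 where "\<epsilon>0 = Min (insert (1/2) (h ` insert x (fibre x)))"
  have "\<epsilon>0 > 0"
    using finite_fibre h_pos by (auto simp: \<epsilon>0_def)
  have "\<epsilon>0 \<le> z" if "z \<in> insert (1/2) (h ` insert x (fibre x))" for z
    unfolding \<epsilon>0_def using finite_fibre that by (intro Min_le) auto
  then have \<epsilon>0_le: "\<epsilon>0 \<le> 1/2" "\<epsilon>0 \<le> h x" "\<And>y. y \<in> fibre x \<Longrightarrow> \<epsilon>0 \<le> h y"
    by blast+
  have bounds: "eventually (\<lambda>\<epsilon>. (\<Sum>y\<in>fibre x. (h y - \<epsilon>) / J y) \<le> (1 + \<epsilon>) ^ d * (h x + \<epsilon>)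
      \<and> (1 - \<epsilon>) ^ d * (h x - \<epsilon>) \<le> (\<Sum>y\<in>fibre x. (h y + \<epsilon>) / J y)) (at_right 0)"
  proof (rule eventually_at_rightI[OF _ \<open>\<epsilon>0 > 0\<close>])
    fix \<epsilon> :: real
    assume "\<epsilon> \<in> {0<..<\<epsilon>0}"
    then show "(\<Sum>y\<in>fibre x. (h y - \<epsilon>) / J y) \<le> (1 + \<epsilon>) ^ d * (h x + \<epsilon>)
      \<and> (1 - \<epsilon>) ^ d * (h x - \<epsilon>) \<le> (\<Sum>y\<in>fibre x. (h y + \<epsilon>) / J y)"
      using sum_fibre_density_le[of \<epsilon> x] sum_fibre_density_ge[of \<epsilon> x] \<epsilon>0_le
      unfolding J_def d_def by force
  qed
  have limits: "((\<lambda>\<epsilon>. (\<Sum>y\<in>fibre x. (h y - \<epsilon>) / J y)) \<longlongrightarrow> (\<Sum>y\<in>fibre x. (h y - 0) / J y)) (at_right 0)"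
    "((\<lambda>\<epsilon>. (\<Sum>y\<in>fibre x. (h y + \<epsilon>) / J y)) \<longlongrightarrow> (\<Sum>y\<in>fibre x. (h y + 0) / J y)) (at_right 0)"
    "((\<lambda>\<epsilon>. (1 + \<epsilon>) ^ d * (h x + \<epsilon>)) \<longlongrightarrow> (1 + 0) ^ d * (h x + 0)) (at_right (0::real))"
    "((\<lambda>\<epsilon>. (1 - \<epsilon>) ^ d * (h x - \<epsilon>)) \<longlongrightarrow> (1 - 0) ^ d * (h x - 0)) (at_right (0::real))"
    by (intro tendsto_intros tendsto_ident_at; simp add: \<open>\<And>y. J y \<noteq> 0\<close>)+
  have "(\<Sum>y\<in>fibre x. (h y - 0) / J y) \<le> (1 + 0) ^ d * (h x + 0)"
    by (rule tendsto_le[OF trivial_limit_at_right_real limits(3,1)]) (rule eventually_mono[OF bounds], blast)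
  moreover have "(1 - 0) ^ d * (h x - 0) \<le> (\<Sum>y\<in>fibre x. (h y + 0) / J y)"
    by (rule tendsto_le[OF trivial_limit_at_right_real limits(2,4)]) (rule eventually_mono[OF bounds], blast)
  ultimately have "(\<Sum>y\<in>fibre x. h y / J y) \<le> h x" "h x \<le> (\<Sum>y\<in>fibre x. h y / J y)"
    by simp_all
  then show ?thesis
    by (simp add: J_def)
qed

end

lemma smooth_on_UNIV_differentiable: "smooth_on UNIV f \<Longrightarrow> f differentiable (at x)"
  unfolding smooth_on_def by (metis UNIV_I dirder.simps(1))

lemma smooth_on_UNIV_has_derivative:
  "smooth_on UNIV f \<Longrightarrow> (f has_derivative frechet_derivative f (at x)) (at x)"
  using smooth_on_UNIV_differentiable frechet_derivative_works by blast

lemma smooth_on_UNIV_continuous_on: "smooth_on UNIV f \<Longrightarrow> continuous_on UNIV f"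
  using smooth_on_UNIV_differentiable differentiable_imp_continuous_within continuous_at_imp_continuous_on
  by blast

lemma smooth_on_UNIV_continuous_on_derivative:
  assumes "smooth_on UNIV f"
  shows "continuous_on UNIV (\<lambda>x. frechet_derivative f (at x) v)"
proof -
  have "dirder [v] f differentiable (at x)" for x
    using assms unfolding smooth_on_def by blast
  then have "continuous (at x) (\<lambda>x. frechet_derivative f (at x) v)" for x
    by (simp add: differentiable_imp_continuous_within)
  then show ?thesis
    by (simp add: continuous_at_imp_continuous_on)
qed

lemma linear_frechet_derivative_smooth: "smooth_on UNIV f \<Longrightarrow> linear (frechet_derivative f (at x))"
  using smooth_on_UNIV_has_derivative has_derivative_bounded_linear bounded_linear.linear by blast

lemma adjoint_comp:
  fixes f :: "'a::euclidean_space \<Rightarrow> 'b::euclidean_space" and g :: "'b \<Rightarrow> 'c::euclidean_space"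
  assumes "linear f" "linear g"
  shows "adjoint (g \<circ> f) = adjoint f \<circ> adjoint g"
  by (rule adjoint_unique) (simp add: adjoint_works assms)

lemma adjoint_id: "adjoint (id :: 'a::euclidean_space \<Rightarrow> 'a) = id"
  by (rule adjoint_unique) simp

lemma norm_adjoint_le_onorm:
  fixes f :: "'a::euclidean_space \<Rightarrow> 'b::euclidean_space"
  assumes "linear f"
  shows "norm (adjoint f w) \<le> onorm f * norm w"
proof -
  have "bounded_linear f"
    using assms by (simp add: linear_conv_bounded_linear)
  have "norm (adjoint f w) * norm (adjoint f w) = adjoint f w \<bullet> adjoint f w"
    by (simp add: power2_norm_eq_inner flip: power2_eq_square)
  also have "\<dots> = f (adjoint f w) \<bullet> w"
    by (simp add: adjoint_works assms)
  also have "\<dots> \<le> norm (f (adjoint f w)) * norm w"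
    by (rule norm_cauchy_schwarz)
  also have "\<dots> \<le> (onorm f * norm (adjoint f w)) * norm w"
    using onorm[OF \<open>bounded_linear f\<close>, of "adjoint f w"] by (intro mult_right_mono) auto
  also have "\<dots> = norm (adjoint f w) * (onorm f * norm w)"
    by simp
  finally show ?thesis
    by (cases "adjoint f w = 0") (use onorm_pos_le[OF \<open>bounded_linear f\<close>] in auto)
qed

text \<open>Lower bounds pass to the adjoint of an endomorphism, because a linear injection of a
  finite-dimensional space onto itself is surjective.\<close>

lemma norm_adjoint_ge:
  fixes f :: "'a::euclidean_space \<Rightarrow> 'a"
  assumes "linear f" "c > 0" and lower: "\<And>v. c * norm v \<le> norm (f v)"
  shows "c * norm w \<le> norm (adjoint f w)"
proof (cases "w = 0")
  case False
  have "inj f"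
    using assms linear_injective_0 by (metis mult_le_0_iff norm_le_zero_iff norm_zero not_le)
  then obtain u where u: "w = f u"
    using linear_injective_imp_surjective[OF assms(1)] by (metis surjD)
  have "norm w * norm w = adjoint f w \<bullet> u"
    by (simp add: u adjoint_works assms(1) inner_commute flip: power2_eq_square power2_norm_eq_inner)
  also have "\<dots> \<le> norm (adjoint f w) * norm u"
    by (rule norm_cauchy_schwarz)
  finally have "c * (norm w * norm w) \<le> norm (adjoint f w) * (c * norm u)"
    using assms(2) by (simp add: algebra_simps)
  also have "\<dots> \<le> norm (adjoint f w) * norm w"
    using lower[of u] u by (intro mult_left_mono) auto
  finally show ?thesis
    using False by (simp add: mult.commute mult.left_commute)
qed simp

lemma frechet_derivative_translate_periodic:
  fixes \<tau> :: "real^'d \<Rightarrow> 'b::real_normed_vector"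
  assumes "smooth_on UNIV \<tau>" "periodic \<tau>" "int_vec k"
  shows "frechet_derivative \<tau> (at (x + k)) = frechet_derivative \<tau> (at x)"
proof -
  have "((\<lambda>z. z + - k) has_derivative id) (at (x + k))"
    using has_derivative_add_const[OF has_derivative_ident, of "- k" "at (x + k)"] by (simp add: id_def)
  then have "((\<lambda>z. \<tau> (z + - k)) has_derivative frechet_derivative \<tau> (at x)) (at (x + k))"
    using has_derivative_compose smooth_on_UNIV_has_derivative[OF assms(1), of x] by fastforce
  moreover have "(\<lambda>z. \<tau> (z + - k)) = \<tau>"
    using assms(2) int_vec_minus[OF assms(3)] unfolding periodic_def by blast
  ultimately show ?thesis
    by (metis frechet_derivative_at)
qed

text \<open>A periodic function has the same derivative at \<open>x\<close> and at the point of \<open>fund\<close> representing \<open>x\<close>,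
  so the set whose supremum defines \<open>Dtau_norm\<close> is bounded by a maximum over the compact unit cube.\<close>

lemma onorm_frechet_derivative_le_Dtau_norm:
  fixes \<tau> :: "real^'d \<Rightarrow> real^'l"
  assumes smooth: "smooth_on UNIV \<tau>" and "periodic \<tau>"
  shows "onorm (frechet_derivative \<tau> (at x)) \<le> Dtau_norm \<tau>"
proof -
  let ?D = "\<lambda>x. frechet_derivative \<tau> (at x)"
  have lin: "linear (?D x)" for x
    by (rule linear_frechet_derivative_smooth[OF smooth])
  have "\<exists>B. \<forall>z\<in>cbox 0 One. norm (?D z (axis i 1)) \<le> B" for i
  proof -
    have "continuous_on (cbox 0 One) (\<lambda>z. norm (?D z (axis i 1)))"
      using smooth_on_UNIV_continuous_on_derivative[OF smooth, of "axis i 1"]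
      by (intro continuous_on_norm) (auto intro: continuous_on_subset)
    then show ?thesis
      using continuous_attains_sup[OF compact_cbox unit_cube_nonempty] by blast
  qed
  then obtain B where B: "\<And>i z. z \<in> cbox 0 One \<Longrightarrow> norm (?D z (axis i 1)) \<le> B i"
    by metis
  have on_cube: "onorm (?D z) \<le> (\<Sum>i\<in>UNIV. B i)" if "z \<in> cbox 0 One" for z
  proof (rule onorm_le)
    fix v :: "real^'d"
    have "?D z v = (\<Sum>i\<in>UNIV. v $ i *\<^sub>R ?D z (axis i 1))"
      by (subst basis_expansion[symmetric, of v])
         (simp add: linear_sum[OF lin] linear_cmul[OF lin] scalar_mult_eq_scaleR)
    then have "norm (?D z v) \<le> (\<Sum>i\<in>UNIV. \<bar>v $ i\<bar> * norm (?D z (axis i 1)))"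
      using norm_sum[of "\<lambda>i. v $ i *\<^sub>R ?D z (axis i 1)" UNIV] by simp
    also have "\<dots> \<le> (\<Sum>i\<in>UNIV. norm v * B i)"
      using B[OF that] component_le_norm_cart[of v] by (intro sum_mono mult_mono) auto
    finally show "norm (?D z v) \<le> (\<Sum>i\<in>UNIV. B i) * norm v"
      by (simp add: sum_distrib_left mult.commute)
  qed
  have "onorm (?D y) \<le> (\<Sum>i\<in>UNIV. B i)" for y
    using on_cube[of "y - floor_vec y"] diff_floor_vec_in_fund[of y] fund_subset_unit_cube
      frechet_derivative_translate_periodic[OF smooth \<open>periodic \<tau>\<close> int_vec_floor_vec, of "y - floor_vec y" y]
    by auto
  then show ?thesis
    unfolding Dtau_norm_def by (intro cSup_upper) (auto intro!: bdd_aboveI)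
qed

section \<open>Uniformly expanding maps\<close>

locale expanding_torus_map =
  fixes T :: "real^'d \<Rightarrow> real^'d" and h :: "real^'d \<Rightarrow> real"
  assumes T_smooth: "smooth_on UNIV T" and T_lift: "torus_lift T"
    and gamma_gt_1: "gamma_exp T > 1"
    and h_smooth: "smooth_on UNIV h" and h_periodic: "periodic h" and h_pos: "\<And>x. h x > 0"
    and h_invariant: "invariant_density T h"
begin

abbreviation T' :: "real^'d \<Rightarrow> real^'d \<Rightarrow> real^'d" where
  "T' y \<equiv> frechet_derivative T (at y)"

lemma linear_T': "linear (T' y)"
  by (rule linear_frechet_derivative_smooth[OF T_smooth])

lemma T_borel [measurable]: "T \<in> borel_measurable borel"
  using smooth_on_UNIV_continuous_on[OF T_smooth] by (intro borel_measurable_continuous_onI) simp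

lemma h_borel [measurable]: "h \<in> borel_measurable borel"
  using smooth_on_UNIV_continuous_on[OF h_smooth] by (intro borel_measurable_continuous_onI) simp

lemma has_derivative_iterate: "((T ^^ n) has_derivative DT T n y) (at y)"
proof -
  have "(T ^^ n) differentiable (at y)" for y
  proof (induction n arbitrary: y)
    case (Suc n)
    then show ?case
      unfolding funpow_Suc_right
      by (rule differentiable_chain_at[OF smooth_on_UNIV_differentiable[OF T_smooth]])
  qed (simp add: id_def differentiable_ident)
  then show ?thesis
    unfolding DT_def using frechet_derivative_works by blast
qed

lemma linear_DT: "linear (DT T n y)"
  using has_derivative_iterate has_derivative_bounded_linear bounded_linear.linear by blast

lemma DT_0: "DT T 0 y = id"
  unfolding DT_def by (metis frechet_derivative_at has_derivative_id funpow_0 id_apply eq_id_iff)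

lemma DT_Suc: "DT T (Suc n) y = DT T n (T y) \<circ> T' y"
proof -
  have "((T ^^ n) \<circ> T has_derivative DT T n (T y) \<circ> T' y) (at y)"
    by (rule diff_chain_at[OF smooth_on_UNIV_has_derivative[OF T_smooth] has_derivative_iterate])
  then show ?thesis
    unfolding DT_def funpow_Suc_right by (metis frechet_derivative_at)
qed

lemma gamma_le_norm_T': "gamma_exp T * norm v \<le> norm (T' y v)"
proof (cases "v = 0")
  case False
  have "norm (v /\<^sub>R norm v) = 1"
    using False by simp
  then have "gamma_exp T \<le> norm (T' y (v /\<^sub>R norm v))"
    unfolding gamma_exp_def by (intro cInf_lower) (blast, auto intro!: bdd_belowI[of _ 0])
  moreover have "T' y v = norm v *\<^sub>R T' y (v /\<^sub>R norm v)"
    using False by (simp add: linear_cmul[OF linear_T'])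
  ultimately show ?thesis
    using mult_right_mono[of "gamma_exp T" "norm (T' y (v /\<^sub>R norm v))" "norm v"] by (simp add: mult.commute)
qed (simp add: linear_0[OF linear_T'])

lemma gamma_pow_le_norm_DT: "gamma_exp T ^ n * norm v \<le> norm (DT T n y v)"
proof (induction n arbitrary: y v)
  case (Suc n)
  have "gamma_exp T ^ Suc n * norm v \<le> gamma_exp T ^ n * norm (T' y v)"
    using gamma_le_norm_T' gamma_gt_1 by (simp add: mult.assoc mult_left_mono)
  also have "\<dots> \<le> norm (DT T n (T y) (T' y v))"
    by (rule Suc.IH)
  finally show ?case
    by (simp add: DT_Suc)
qed (simp add: DT_0)

lemma DT_eq_0D:
  assumes "DT T n y v = 0"
  shows "v = 0"
proof -
  have "0 < gamma_exp T ^ n"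
    using gamma_gt_1 by simp
  then show ?thesis
    using gamma_pow_le_norm_DT[of n v y] assms by (simp add: mult_le_0_iff)
qed

lemma int_vec_iterate_translate: "int_vec k \<Longrightarrow> int_vec ((T ^^ n) (x + k) - (T ^^ n) x)"
proof (induction n arbitrary: x)
  case (Suc n)
  then have "int_vec (T ((T ^^ n) x + ((T ^^ n) (x + k) - (T ^^ n) x)) - T ((T ^^ n) x))"
    using T_lift unfolding torus_lift_def by blast
  then show ?case
    by simp
qed simp

lemma h_translate: "int_vec k \<Longrightarrow> h (x + k) = h x"
  using h_periodic by (auto simp: periodic_def)

lemma nn_integral_invariant:
  assumes [measurable]: "A \<in> sets borel" and A_periodic: "\<And>z k. int_vec k \<Longrightarrow> z + k \<in> A \<longleftrightarrow> z \<in> A"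
  shows "(\<integral>\<^sup>+u. ennreal (h u) * indicator A (T u) * indicator fund u \<partial>lborel)
       = (\<integral>\<^sup>+u. ennreal (h u) * indicator A u * indicator fund u \<partial>lborel)"
proof -
  obtain z where "\<And>x. x \<in> cbox 0 One \<Longrightarrow> h x \<le> h z"
    using continuous_attains_sup[OF compact_cbox unit_cube_nonempty
        continuous_on_subset[OF smooth_on_UNIV_continuous_on[OF h_smooth]]] by blast
  then have cube_integral: "ennreal (integral (cbox 0 One) (\<lambda>u. indicator B (g u) * h u))
      = (\<integral>\<^sup>+u. ennreal (h u) * indicator B (g u) * indicator fund u \<partial>lborel)"
    if [measurable]: "B \<in> sets borel" "g \<in> borel_measurable borel" for B g
    using h_pos by (subst integral_unit_cube_eq_nn_integral_fund[where C="h z"])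
      (auto simp: indicator_def less_imp_le intro!: nn_integral_cong)
  have "integral (cbox 0 One) (\<lambda>u. indicator A (T u) * h u) = integral (cbox 0 One) (\<lambda>u. indicator A (id u) * h u)"
    using h_invariant A_periodic unfolding invariant_density_def by auto
  then show ?thesis
    using cube_integral[of A T] cube_integral[of A id] by simp
qed

lemma nn_integral_invariant_iterate:
  assumes "A \<in> sets borel" "\<And>z k. int_vec k \<Longrightarrow> z + k \<in> A \<longleftrightarrow> z \<in> A"
  shows "(\<integral>\<^sup>+u. ennreal (h u) * indicator A ((T ^^ n) u) * indicator fund u \<partial>lborel)
       = (\<integral>\<^sup>+u. ennreal (h u) * indicator A u * indicator fund u \<partial>lborel)"
  using assms
proof (induction n arbitrary: A)
  case (Suc n)
  have "T -` A \<in> sets borel"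
    using measurable_sets[OF T_borel Suc.prems(1)] by simp
  moreover have "z + k \<in> T -` A \<longleftrightarrow> z \<in> T -` A" if "int_vec k" for z k
    using Suc.prems(2)[of "T (z + k) - T z" "T z"] T_lift that by (auto simp: torus_lift_def)
  ultimately have "(\<integral>\<^sup>+u. ennreal (h u) * indicator (T -` A) ((T ^^ n) u) * indicator fund u \<partial>lborel)
      = (\<integral>\<^sup>+u. ennreal (h u) * indicator (T -` A) u * indicator fund u \<partial>lborel)"
    by (rule Suc.IH)
  then show ?case
    using nn_integral_invariant[OF Suc.prems] by (simp add: indicator_def)
qed simp

lemma iterate_invariant_density:
  "torus_local_diffeo_invariant_density (T ^^ n) (DT T n) h"
  by unfold_locales
    (auto intro: has_derivative_iterate DT_eq_0D int_vec_iterate_translate h_translate h_pos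
      nn_integral_invariant_iterate smooth_on_UNIV_continuous_on[OF h_smooth])

lemma preim_eq_fibre: "preim T n x = torus_local_diffeo.fibre (T ^^ n) x"
proof -
  interpret torus_local_diffeo_invariant_density "T ^^ n" "DT T n" h
    by (rule iterate_invariant_density)
  show ?thesis
    by (simp add: preim_def fibre_def)
qed

lemma finite_preim: "finite (preim T n x)"
proof -
  interpret torus_local_diffeo_invariant_density "T ^^ n" "DT T n" h
    by (rule iterate_invariant_density)
  show ?thesis
    using finite_fibre by (simp add: preim_eq_fibre)
qed

lemma A_n_pos: "A_n T h n y > 0"
proof -
  interpret torus_local_diffeo_invariant_density "T ^^ n" "DT T n" h
    by (rule iterate_invariant_density)
  show ?thesis
    using det_S'_pos h_pos by (simp add: A_n_def)
qed

lemma sum_A_n_eq_1: "(\<Sum>y\<in>preim T n x. A_n T h n y) = 1"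
proof -
  have "h ((T ^^ n) y) = h x" if "y \<in> preim T n x" for y
    using h_translate[of "(T ^^ n) y - x" x] that by (simp add: preim_def)
  then have "(\<Sum>y\<in>preim T n x. A_n T h n y) = (\<Sum>y\<in>preim T n x. h y / \<bar>det (matrix (DT T n y))\<bar>) / h x"
    by (simp add: A_n_def sum_divide_distrib)
  also have "\<dots> = 1"
  proof -
    interpret torus_local_diffeo_invariant_density "T ^^ n" "DT T n" h
      by (rule iterate_invariant_density)
    show ?thesis
      using sum_fibre_density_over_jacobian h_pos[of x] by (simp add: preim_eq_fibre)
  qed
  finally show ?thesis .
qed

lemma F_n_0: "F_n T \<tau> 0 nn y \<xi> = \<xi>"
  by (simp add: F_n_def W_n_def DT_0 adjoint_id)

lemma F_n_Suc:
  assumes "smooth_on UNIV \<tau>"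
  shows "F_n T \<tau> (Suc n) nn y \<xi>
       = adjoint (T' y) (F_n T \<tau> n nn (T y) \<xi>) + adjoint (frechet_derivative \<tau> (at y)) nn"
proof -
  have adjoint_DT_Suc: "adjoint (DT T (Suc k) z) = adjoint (T' z) \<circ> adjoint (DT T k (T z))" for k z
    by (simp add: DT_Suc adjoint_comp linear_T' linear_DT)
  have lin: "linear (adjoint (T' y))"
    by (rule adjoint_linear[OF linear_T'])
  have "W_n T \<tau> (Suc n) y nn = adjoint (frechet_derivative \<tau> (at y)) nn + adjoint (T' y) (W_n T \<tau> n (T y) nn)"
    unfolding W_n_def sum.lessThan_Suc_shift
    by (simp add: DT_0 adjoint_id adjoint_DT_Suc linear_sum[OF lin] funpow_swap1)
  then show ?thesis
    unfolding F_n_def adjoint_DT_Suc by (simp add: linear_add[OF lin] algebra_simps)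
qed

text \<open>Each step of the cocycle multiplies by at least \<open>\<gamma>\<close> and adds an error of size at most
  \<open>\<parallel>D\<tau>\<parallel> < (\<gamma> - 1) R / 2\<close>, so above the threshold \<open>R\<close> the frequency grows at least by the factor
  \<open>(\<gamma> + 1) / 2\<close>.\<close>

lemma norm_F_n_ge:
  fixes \<tau> :: "real^'d \<Rightarrow> real^'l"
  assumes smooth: "smooth_on UNIV \<tau>" and "periodic \<tau>" and "norm nn = 1"
    and R: "2 * Dtau_norm \<tau> < (gamma_exp T - 1) * R" and "R < norm \<xi>"
  shows "((gamma_exp T + 1) / 2) ^ n * norm \<xi> \<le> norm (F_n T \<tau> n nn y \<xi>)"
proof (induction n arbitrary: y)
  case (Suc n)
  let ?\<gamma> = "gamma_exp T" and ?c = "(gamma_exp T + 1) / 2" and ?F = "F_n T \<tau> n nn (T y) \<xi>"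
  have "1 \<le> ?c"
    using gamma_gt_1 by simp
  then have "norm \<xi> \<le> ?c ^ n * norm \<xi>"
    by (simp add: one_le_power mult_le_cancel_right1)
  then have "R < norm ?F"
    using Suc.IH[of "T y"] \<open>R < norm \<xi>\<close> by linarith
  then have "2 * Dtau_norm \<tau> < (?\<gamma> - 1) * norm ?F"
    using R gamma_gt_1 mult_left_mono[of R "norm ?F" "?\<gamma> - 1"] by linarith
  moreover have "?\<gamma> * norm ?F \<le> norm (adjoint (T' y) ?F)"
    using gamma_gt_1 by (intro norm_adjoint_ge linear_T' gamma_le_norm_T') auto
  moreover have "norm (adjoint (frechet_derivative \<tau> (at y)) nn) \<le> Dtau_norm \<tau>"
    using norm_adjoint_le_onorm[OF linear_frechet_derivative_smooth[OF smooth], of y nn]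
      onorm_frechet_derivative_le_Dtau_norm[OF smooth \<open>periodic \<tau>\<close>, of y] \<open>norm nn = 1\<close> by simp
  moreover have "norm (adjoint (T' y) ?F) - norm (adjoint (frechet_derivative \<tau> (at y)) nn)
      \<le> norm (F_n T \<tau> (Suc n) nn y \<xi>)"
    unfolding F_n_Suc[OF smooth] by (rule norm_diff_ineq)
  ultimately have "?c * norm ?F \<le> norm (F_n T \<tau> (Suc n) nn y \<xi>)"
    by (simp add: field_simps)
  moreover have "?c ^ Suc n * norm \<xi> \<le> ?c * norm ?F"
    using Suc.IH[of "T y"] \<open>1 \<le> ?c\<close> by (simp add: mult_left_mono mult.assoc)
  ultimately show ?case
    by linarith
qed (simp add: F_n_0)

end

lemma weighted_mean_le:
  fixes a t :: "'a \<Rightarrow> real"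
  assumes "sum a P = 1" "\<And>y. y \<in> P \<Longrightarrow> 0 \<le> a y" "\<And>y. y \<in> P \<Longrightarrow> t y \<le> c"
  shows "(\<Sum>y\<in>P. a y * t y) \<le> c"
proof -
  have "(\<Sum>y\<in>P. a y * t y) \<le> (\<Sum>y\<in>P. a y * c)"
    using assms by (intro sum_mono mult_left_mono) auto
  then show ?thesis
    using assms(1) by (simp add: sum_distrib_right[symmetric])
qed

lemma weighted_mean_less_iff:
  fixes a t :: "'a \<Rightarrow> real"
  assumes "finite P" "sum a P = 1" "\<And>y. y \<in> P \<Longrightarrow> 0 < a y" "\<And>y. y \<in> P \<Longrightarrow> t y \<le> c"
  shows "(\<Sum>y\<in>P. a y * t y) < c \<longleftrightarrow> (\<exists>y\<in>P. t y < c)"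
proof
  assume "\<exists>y\<in>P. t y < c"
  then have "(\<Sum>y\<in>P. a y * t y) < (\<Sum>y\<in>P. a y * c)"
    using assms by (intro sum_strict_mono_ex1) (auto intro: mult_left_mono mult_strict_left_mono)
  then show "(\<Sum>y\<in>P. a y * t y) < c"
    using assms(2) by (simp add: sum_distrib_right[symmetric])
next
  assume less: "(\<Sum>y\<in>P. a y * t y) < c"
  show "\<exists>y\<in>P. t y < c"
  proof (rule ccontr)
    assume "\<not> (\<exists>y\<in>P. t y < c)"
    then have "t y = c" if "y \<in> P" for y
      using assms(4)[OF that] that by force
    then have "(\<Sum>y\<in>P. a y * t y) = (\<Sum>y\<in>P. a y * c)"
      by simp
    then show False
      using less assms(2) by (simp add: sum_distrib_right[symmetric])
  qed
qed

locale radial_cutoff =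
  fixes g0 :: "real \<Rightarrow> real" and R c :: real
  assumes R_gt_1: "R > 1" and c_gt_1: "c > 1"
    and g0_low: "\<And>t. 0 \<le> t \<Longrightarrow> t \<le> R \<Longrightarrow> g0 t = 1"
    and g0_high: "\<And>t. c * R \<le> t \<Longrightarrow> g0 t = t"
    and g0_mono: "strict_mono_on {R..<c * R} g0"
    and g0_mid: "\<And>t. R \<le> t \<Longrightarrow> t < c * R \<Longrightarrow> 1 \<le> g0 t \<and> g0 t \<le> t"
begin

lemma one_less_g0: "R < t \<Longrightarrow> 1 < g0 t"
proof (cases "t < c * R")
  case True
  assume "R < t"
  moreover have "R < c * R"
    using R_gt_1 c_gt_1 by simp
  ultimately have "g0 R < g0 t"
    using g0_mono True unfolding strict_mono_on_def by auto
  then show ?thesis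
    using g0_low[of R] R_gt_1 by simp
qed (use g0_high R_gt_1 in auto)

lemma one_le_g0: "0 \<le> t \<Longrightarrow> 1 \<le> g0 t"
  using g0_low one_less_g0 by (cases "t \<le> R") (auto intro: less_imp_le)

lemma g0_le_self: "R < t \<Longrightarrow> g0 t \<le> t"
  using g0_mid g0_high by (cases "t < c * R") auto

end

locale cutoff_setting = expanding_torus_map T h + radial_cutoff g0 R "(gamma_exp T + 1) / 2"
  for T :: "real^'d \<Rightarrow> real^'d" and h g0 R +
  fixes \<tau> :: "real^'d \<Rightarrow> real^'l" and s :: real and nn :: "real^'l"
  assumes \<tau>_smooth: "smooth_on UNIV \<tau>" and \<tau>_periodic: "periodic \<tau>"
    and s_neg: "s < 0" and nn_unit: "norm nn = 1"
    and R_large: "2 * Dtau_norm \<tau> < (gamma_exp T - 1) * R"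
begin

abbreviation (input) c :: real where "c \<equiv> (gamma_exp T + 1) / 2"

lemma p_tilde_small_frequency:
  assumes "norm \<xi> \<le> R"
  shows "p_tilde T h \<tau> g0 s nn n x \<xi> \<le> 1"
    and "p_tilde T h \<tau> g0 s nn n x \<xi> < 1 \<longleftrightarrow> (\<exists>y\<in>preim T n x. R < norm (F_n T \<tau> n nn y \<xi>))"
proof -
  define t where "t y = g0 (norm (F_n T \<tau> n nn y \<xi>)) powr (2 * s)" for y
  have p: "p_tilde T h \<tau> g0 s nn n x \<xi> = (\<Sum>y\<in>preim T n x. A_n T h n y * t y)"
    using g0_low[OF norm_ge_zero assms] by (simp add: p_tilde_def t_def)
  have t_le: "t y \<le> 1" for y
    unfolding t_def using powr_mono2'[of "2 * s" 1] one_le_g0[OF norm_ge_zero] s_neg by force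
  have "t y < 1 \<longleftrightarrow> R < norm (F_n T \<tau> n nn y \<xi>)" for y
  proof
    assume "R < norm (F_n T \<tau> n nn y \<xi>)"
    then show "t y < 1"
      unfolding t_def using one_less_g0 s_neg by (intro powr_less_one) auto
  next
    assume "t y < 1"
    show "R < norm (F_n T \<tau> n nn y \<xi>)"
    proof (rule ccontr)
      assume "\<not> R < norm (F_n T \<tau> n nn y \<xi>)"
      then show False
        using \<open>t y < 1\<close> g0_low[OF norm_ge_zero, of "F_n T \<tau> n nn y \<xi>"] by (simp add: t_def)
    qed
  qed
  then show "p_tilde T h \<tau> g0 s nn n x \<xi> \<le> 1"
    and "p_tilde T h \<tau> g0 s nn n x \<xi> < 1 \<longleftrightarrow> (\<exists>y\<in>preim T n x. R < norm (F_n T \<tau> n nn y \<xi>))"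
    using weighted_mean_le[OF sum_A_n_eq_1, where t=t] weighted_mean_less_iff[OF finite_preim sum_A_n_eq_1, where t=t]
      A_n_pos t_le by (auto simp: p less_imp_le)
qed

lemma p_tilde_large_frequency:
  assumes "R < norm \<xi>" "n \<ge> 1"
  shows "p_tilde T h \<tau> g0 s nn n x \<xi> \<le> c powr (2 * s)"
    and "\<And>y. R < norm (F_n T \<tau> n nn y \<xi>)"
proof -
  have F_large: "c * norm \<xi> \<le> norm (F_n T \<tau> n nn y \<xi>)" for y
  proof -
    have "c \<le> c ^ n"
      using c_gt_1 assms(2) by (metis power_increasing power_one_right less_imp_le)
    then show ?thesis
      using norm_F_n_ge[OF \<tau>_smooth \<tau>_periodic nn_unit R_large assms(1), of n y]
      by (meson mult_right_mono norm_ge_zero order_trans)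
  qed
  have "0 < norm \<xi>"
    using assms(1) R_gt_1 by linarith
  then have "norm \<xi> < c * norm \<xi>"
    using mult_strict_right_mono[OF c_gt_1] by (simp only: mult_1)
  then show "\<And>y. R < norm (F_n T \<tau> n nn y \<xi>)"
    using F_large assms(1) by (meson less_le_trans less_trans)
  have "c \<le> g0 (norm (F_n T \<tau> n nn y \<xi>)) / g0 (norm \<xi>)" for y
  proof -
    have "c * R \<le> norm (F_n T \<tau> n nn y \<xi>)"
      using F_large[of y] assms(1) c_gt_1 by (meson less_imp_le mult_left_mono order_trans less_trans zero_less_one)
    then have "g0 (norm (F_n T \<tau> n nn y \<xi>)) = norm (F_n T \<tau> n nn y \<xi>)"
      by (rule g0_high)
    moreover have "0 < g0 (norm \<xi>)"
      using one_le_g0[OF norm_ge_zero, of \<xi>] by simp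
    moreover have "c * g0 (norm \<xi>) \<le> c * norm \<xi>"
      using g0_le_self[OF assms(1)] c_gt_1 by (intro mult_left_mono) auto
    ultimately show ?thesis
      using F_large[of y] by (simp add: pos_le_divide_eq)
  qed
  then have ratio_le: "(g0 (norm (F_n T \<tau> n nn y \<xi>)) / g0 (norm \<xi>)) powr (2 * s) \<le> c powr (2 * s)" for y
    using c_gt_1 s_neg by (intro powr_mono2') auto
  show "p_tilde T h \<tau> g0 s nn n x \<xi> \<le> c powr (2 * s)"
    unfolding p_tilde_def by (rule weighted_mean_le[OF sum_A_n_eq_1]) (use A_n_pos ratio_le in \<open>auto intro: less_imp_le\<close>)
qed

lemma c_powr_less_1: "c powr (2 * s) < 1"
  using c_gt_1 s_neg by (intro powr_less_one) auto

lemma p_tilde_le_1_less_1_iff: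
  assumes "n \<ge> 1"
  shows "p_tilde T h \<tau> g0 s nn n x \<xi> \<le> 1 \<and>
    (p_tilde T h \<tau> g0 s nn n x \<xi> < 1 \<longleftrightarrow> (\<exists>y\<in>preim T n x. R < norm (F_n T \<tau> n nn y \<xi>)))"
proof (cases "norm \<xi> \<le> R")
  case False
  then have "p_tilde T h \<tau> g0 s nn n x \<xi> \<le> c powr (2 * s)" "\<And>y. R < norm (F_n T \<tau> n nn y \<xi>)"
    using p_tilde_large_frequency assms by auto
  moreover have "preim T n x \<noteq> {}"
    using sum_A_n_eq_1[of n x] by auto
  ultimately show ?thesis
    using c_powr_less_1 by auto
qed (use p_tilde_small_frequency in blast)

end

theorem mainTheorem8:
  fixes T :: "real^'d \<Rightarrow> real^'d" and h :: "real^'d \<Rightarrow> real"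
    and \<tau> :: "real^'d \<Rightarrow> real^'l" and g0 :: "real \<Rightarrow> real"
    and s R :: real and nn :: "real^'l"
  assumes T_smooth: "smooth_on UNIV T" and T_lift: "torus_lift T"
    and gamma_gt: "gamma_exp T > 1"
    and h_smooth: "smooth_on UNIV h" and h_per: "periodic h" and h_pos: "\<And>x. h x > 0"
    and h_prob: "integral (cbox 0 One) h = 1"
    and h_inv: "invariant_density T h"
    and tau_smooth: "smooth_on UNIV \<tau>" and tau_per: "periodic \<tau>"
    and s_neg: "s < 0"
    and R_gt: "R > max 1 (max 1 (2 * Dtau_norm \<tau>) / (gamma_exp T - 1))"
    and g0_smooth: "smooth_on {0<..} g0"
    and g0_low: "\<And>t. 0 \<le> t \<Longrightarrow> t \<le> R \<Longrightarrow> g0 t = 1"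
    and g0_high: "\<And>t. (gamma_exp T + 1) / 2 * R \<le> t \<Longrightarrow> g0 t = t"
    and g0_mono: "strict_mono_on {R..<(gamma_exp T + 1) / 2 * R} g0"
    and g0_mid: "\<And>t. R \<le> t \<Longrightarrow> t < (gamma_exp T + 1) / 2 * R \<Longrightarrow> 1 \<le> g0 t \<and> g0 t \<le> t"
    and nn_unit: "norm nn = 1"
  shows "(\<forall>n x \<xi>. n \<ge> 1 \<longrightarrow> p_tilde T h \<tau> g0 s nn n x \<xi> \<le> 1)
       \<and> (\<forall>n x \<xi>. n \<ge> 1 \<longrightarrow>
            (p_tilde T h \<tau> g0 s nn n x \<xi> < 1 \<longleftrightarrow>
             (\<exists>y \<in> preim T n x. norm (F_n T \<tau> n nn y \<xi>) > R)))
       \<and> (\<forall>n x \<xi>. n \<ge> 1 \<longrightarrow> norm \<xi> > R \<longrightarrow>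
            p_tilde T h \<tau> g0 s nn n x \<xi> \<le> ((gamma_exp T + 1) / 2) powr (2 * s)
            \<and> ((gamma_exp T + 1) / 2) powr (2 * s) < 1)"
proof -
  have "R * (gamma_exp T - 1) > max 1 (2 * Dtau_norm \<tau>)"
    using R_gt gamma_gt by (simp add: divide_less_eq mult.commute)
  then interpret cutoff_setting T h g0 R \<tau> s nn
    using assms by unfold_locales (auto simp: strict_mono_on_def mult.commute)
  show ?thesis
    using p_tilde_le_1_less_1_iff p_tilde_large_frequency(1) c_powr_less_1 by auto
qed

end
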